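(* Assume (H1)–(H3) and (A1): the $r\times r$ matrices $(q_u,q_v)A_\pm^{-1}\binom{0}{I_r}$ have distinct eigenvalues. Then for $|\lambda|$ sufficiently small the constant-coefficient equation $-A_\pm W'+(Q_\pm-\lambda)W=0$ has a basis of $N=n+r$ solutions $e^{\mu_j^\pm(\lambda)x}V_j^\pm(\lambda)$ with $\mu_j^\pm,V_j^\pm$ analytic in $\lambda$, consisting of $r$ fast modes $$\mu_j^\pm=\gamma_j^\pm+O(\lambda),\qquad V_j^\pm=A_\pm^{-1}S_j^\pm+O(\lambda),\qquad S_j^\pm=\binom{0}{s_j^\pm},$$ where $\gamma_j^\pm\ (\ne0)$ and $s_j^\pm$ are the eigenvalues and right eigenvectors of $(q_u,q_v)A_\pm^{-1}\binom{0}{I_r}$, and $n$ slow modes $$\mu_{r+j}^\pm=-\frac{\lambda}{a_j^{*\pm}}+\frac{\lambda^2\beta_j^{*\pm}}{(a_j^{*\pm})^3}+O(\lambda^3),\qquad V_{r+j}^\pm=R_j^{*\pm}+O(\lambda),\qquad j=1,\dots,n.$$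
   Context: Relaxation system $\partial_t\binom uv+\partial_x\binom{f(u,v)}{g(u,v)}=\binom{0}{q(u,v)}$, $u\in\mathbb R^n$, $v\in\mathbb R^r$, $N=n+r$, with equilibrium manifold $v=v^*(u)$, $q(u,v^*(u))\equiv0$, $\mathrm{Re}\,\sigma(q_v)<0$, equilibrium flux $f^*(u)=f(u,v^*(u))$; profile speed normalized to $0$. $A(u,v):=\begin{pmatrix} f_u&f_v\\ g_u&g_v\end{pmatrix}$, $Q(u,v):=\begin{pmatrix}0&0\\ q_u&q_v\end{pmatrix}$, $A_\pm,Q_\pm$ their values at the endstates $(u_\pm,v_\pm)$. (H1) eigenvalues of $A$ real, semisimple, constant multiplicity, nonzero. (H2) $df^*(u_\pm)$ has real, distinct, nonzero eigenvalues $a_j^{*\pm}$ with right/left eigenvectors $r_j^{*\pm},l_j^{*\pm}$, $l_j^{*t}r_k^*=\delta_{jk}$. (H3) $\exists\theta>0$: $\mathrm{Re}\,\sigma(i\xi A_\pm+Q_\pm)\le-\theta|\xi|^2/(1+|\xi|^2)$. Define $R_j^{*\pm}:=\binom{r_j^{*\pm}}{-q_v^{-1}q_ur_j^{*\pm}}$, the Chapman–Enskog viscosity $B^*:=-f_vq_v^{-1}\big(g_u-g_vq_v^{-1}q_u+q_v^{-1}q_u\,df^*\big)$ evaluated at $(u_\pm,v_\pm)$ (with $df^*=f_u-f_vq_v^{-1}q_u$), and $\beta_j^{*\pm}:=l_j^{*\pm t}B^*_\pm r_j^{*\pm}$. *)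

theory Defs
  imports "HOL-Analysis.Analysis" "HOL-Library.Landau_Symbols"
begin

definition cmat :: "real^'c^'b \<Rightarrow> complex^'c^'b" where
  "cmat M = (\<chi> i j. complex_of_real (M $ i $ j))"

definition cvec :: "real^'b \<Rightarrow> complex^'b" where
  "cvec v = (\<chi> i. complex_of_real (v $ i))"

definition eigvals :: "complex^'b^'b \<Rightarrow> complex set" where
  "eigvals M = {\<sigma>. \<exists>v. v \<noteq> 0 \<and> M *v v = \<sigma> *s v}"

definition semisimple :: "complex^'b^'b \<Rightarrow> bool" where
  "semisimple M \<longleftrightarrow> (\<exists>P::complex^'b^'b. invertible P \<and>
      (\<exists>d. matrix_inv P ** M ** P = (\<chi> i j. if i = j then d i else 0)))"

text \<open>Block matrix with rows/columns indexed by u-components (Inl) then v-components (Inr).\<close>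
definition blk :: "'a^'n::finite^'n \<Rightarrow> 'a^'r^'n \<Rightarrow> 'a^'n^'r \<Rightarrow> 'a^'r^'r \<Rightarrow> 'a^('n+'r)^('n+'r)" where
  "blk P11 P12 P21 P22 = (\<chi> i j. case i of
      Inl a \<Rightarrow> (case j of Inl b \<Rightarrow> P11 $ a $ b | Inr b \<Rightarrow> P12 $ a $ b)
    | Inr a \<Rightarrow> (case j of Inl b \<Rightarrow> P21 $ a $ b | Inr b \<Rightarrow> P22 $ a $ b))"

definition stack :: "'a^'n::finite \<Rightarrow> 'a^'r::finite \<Rightarrow> 'a^('n+'r)" where
  "stack x y = (\<chi> i. case i of Inl a \<Rightarrow> x $ a | Inr b \<Rightarrow> y $ b)"

text \<open>The r x N matrix (q_u, q_v) and the N x r matrix (0; I_r).\<close>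
definition rowblk :: "'a^'n^'r \<Rightarrow> 'a^'r^'r \<Rightarrow> 'a^('n+'r)^'r" where
  "rowblk P1 P2 = (\<chi> i j. case j of Inl b \<Rightarrow> P1 $ i $ b | Inr b \<Rightarrow> P2 $ i $ b)"

definition embI :: "'a::zero_neq_one^'r::finite^('n::finite+'r)" where
  "embI = (\<chi> i j. case i of Inl a \<Rightarrow> 0 | Inr b \<Rightarrow> (if b = j then 1 else 0))"

definition dfstar :: "real^'n^'n \<Rightarrow> real^'r^'n \<Rightarrow> real^'n^'r \<Rightarrow> real^'r^'r \<Rightarrow> real^'n^'n" where
  "dfstar fu fv qu qv = fu - fv ** matrix_inv qv ** qu"

definition Bstar :: "real^'n^'n \<Rightarrow> real^'r^'n \<Rightarrow> real^'n^'r \<Rightarrow> real^'r^'r \<Rightarrow>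
    real^'n^'r \<Rightarrow> real^'r^'r \<Rightarrow> real^'n^'n" where
  "Bstar fu fv gu gv qu qv =
     - (fv ** matrix_inv qv ** (gu - gv ** matrix_inv qv ** qu
                                 + matrix_inv qv ** qu ** dfstar fu fv qu qv))"

definition odesols :: "complex^('n::finite+'r::finite)^('n+'r) \<Rightarrow> complex^('n+'r)^('n+'r) \<Rightarrow> complex
    \<Rightarrow> (real \<Rightarrow> complex^('n+'r)) set" where
  "odesols A Q lam = {W. \<forall>x. \<exists>D. (W has_vector_derivative D) (at x) \<and>
       - (A *v D) + (Q *v W x - lam *s W x) = 0}"

end

theory Submission
  imports Defs "HOL-Complex_Analysis.Complex_Analysis"
begin

text \<open>
  Solutions \<open>e\<^sup>\<mu>\<^sup>x V\<close> of \<open>-A W' + (Q - \<lambda>) W = 0\<close> correspond to eigenpairs of the pencil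
  \<open>(Q - \<lambda> - \<mu> A) V = 0\<close>. At \<open>\<lambda> = 0\<close> these are explicit: the fast modes \<open>(\<gamma>\<^sub>j, A\<^sup>-\<^sup>1 S\<^sub>j)\<close>,
  and the slow modes \<open>\<mu> = 0\<close>, \<open>V = R\<^sub>j\<^sup>*\<close>. After the rescaling \<open>\<mu> = \<lambda> \<nu>\<close> of the slow modes,
  every mode together with a normalisation of \<open>V\<close> solves a quadratic system
  \<open>F\<^sub>0(x) + \<lambda> F\<^sub>1(x) = 0\<close> whose linearisation at \<open>\<lambda> = 0\<close> is invertible, because \<open>\<gamma>\<^sub>j\<close> is a simple
  eigenvalue of \<open>(q\<^sub>u, q\<^sub>v) A\<^sup>-\<^sup>1 (0; I)\<close> and \<open>-1/a\<^sub>j\<^sup>*\<close> a simple eigenvalue of the rescaled slow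
  problem. A contraction argument, uniform in the complex parameter, then gives holomorphic
  branches \<open>x(\<lambda>) = x(0) + \<lambda> x'(0) + O(\<lambda>\<^sup>2)\<close>; for a slow mode \<open>x'(0)\<close> is the Chapman--Enskog
  coefficient \<open>\<beta>\<^sub>j\<^sup>*/(a\<^sub>j\<^sup>*)\<^sup>3\<close>. The \<open>N\<close> eigenvectors at \<open>\<lambda> = 0\<close> are independent, so by continuity of the
  determinant they remain a basis for small \<open>\<lambda>\<close>, and the exponentials form a fundamental system.
\<close>

text \<open>\<open>HOL-Complex_Analysis\<close> brings the coefficient notation of formal power series, which clashes
  with vector indexing.\<close>
no_notation fps_nth (infixl \<open>$\<close> 75)

lemma norm_smult_vec: "norm ((c::complex) *s (x::complex^'m)) = norm c * norm x"
  unfolding norm_vec_def by (simp add: L2_set_right_distrib norm_mult)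

abbreviation vec_linear :: "('a::field^'m \<Rightarrow> 'a^'n) \<Rightarrow> bool" where
  "vec_linear \<equiv> Vector_Spaces.linear (*s) (*s)"

definition vec_bilinear :: "('a::field^'l \<Rightarrow> 'a^'m \<Rightarrow> 'a^'n) \<Rightarrow> bool" where
  "vec_bilinear B \<longleftrightarrow> (\<forall>y. vec_linear (\<lambda>x. B x y)) \<and> (\<forall>x. vec_linear (B x))"

lemma vec_linearI:
  "(\<And>x y. f (x + y) = f x + f y) \<Longrightarrow> (\<And>c x. f (c *s x) = c *s f x) \<Longrightarrow> vec_linear f"
  by (simp add: Vector_Spaces.linear_iff vec.vector_space_axioms)

lemma vec_bilinearI:
  "(\<And>y. vec_linear (\<lambda>x. B x y)) \<Longrightarrow> (\<And>x. vec_linear (B x)) \<Longrightarrow> vec_bilinear B"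
  by (simp add: vec_bilinear_def)

lemma vec_linear_imp_linear:
  assumes "vec_linear (f :: complex^'m \<Rightarrow> complex^'n)"
  shows "linear f"
proof -
  have scaleR_vec: "r *\<^sub>R x = complex_of_real r *s x" for r and x :: "complex^'k"
    unfolding vec_eq_iff by (simp add: scaleR_conv_of_real[where 'a=complex])
  show ?thesis
  proof (rule linearI)
    show "f (x + y) = f x + f y" for x y
      by (rule vec.linear_add[OF assms])
    show "f (r *\<^sub>R x) = r *\<^sub>R f x" for r x
      unfolding scaleR_vec by (rule vec.linear_scale[OF assms])
  qed
qed

lemma vec_bilinear_imp_bilinear:
  "vec_bilinear (B :: complex^'l \<Rightarrow> complex^'m \<Rightarrow> complex^'n) \<Longrightarrow> bilinear B"
  unfolding vec_bilinear_def bilinear_def by (auto intro: vec_linear_imp_linear)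

lemma vec_linear_holomorphic:
  assumes "vec_linear f" and "\<And>i. (\<lambda>z. y z $ i) holomorphic_on S"
  shows "(\<lambda>z. f (y z) $ j) holomorphic_on S"
proof -
  have "(\<lambda>z. f (y z) $ j) = (\<lambda>z. \<Sum>i\<in>UNIV. y z $ i * f (axis i 1) $ j)"
    by (rule ext) (rule linear_componentwise[OF assms(1)])
  then show ?thesis
    by (simp only:) (intro holomorphic_on_sum holomorphic_on_mult assms(2) holomorphic_on_const)
qed

lemma vec_bilinear_holomorphic:
  assumes B: "vec_bilinear B"
    and y: "\<And>i. (\<lambda>z. y z $ i) holomorphic_on S" and w: "\<And>i. (\<lambda>z. w z $ i) holomorphic_on S"
  shows "(\<lambda>z. B (y z) (w z) $ j) holomorphic_on S"
proof -
  have "B (y z) (w z) $ j = (\<Sum>i\<in>UNIV. y z $ i * B (axis i 1) (w z) $ j)" for z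
    using B linear_componentwise[of "\<lambda>x. B x (w z)"] unfolding vec_bilinear_def by blast
  moreover have "(\<lambda>z. B (axis i 1) (w z) $ j) holomorphic_on S" for i
    using B w vec_linear_holomorphic unfolding vec_bilinear_def by blast
  ultimately show ?thesis using y by (simp add: holomorphic_on_sum holomorphic_on_mult)
qed

lemma bilinear_diag_diff_le:
  assumes "bilinear B" and bound: "\<And>x y. norm (B x y) \<le> K * norm x * norm y"
  shows "norm (B y y - B y' y') \<le> K * (norm y + norm y') * norm (y - y')"
proof -
  have "B y y - B y' y' = B y (y - y') + B (y - y') y'"
    using assms(1) by (simp add: bilinear_lsub bilinear_rsub)
  then have "norm (B y y - B y' y') \<le> norm (B y (y - y')) + norm (B (y - y') y')"
    by (simp only: norm_triangle_ineq)
  also have "\<dots> \<le> K * norm y * norm (y - y') + K * norm (y - y') * norm y'"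
    by (intro add_mono bound)
  finally show ?thesis
    by (simp add: algebra_simps)
qed

section \<open>Holomorphic solutions of perturbed quadratic systems\<close>

lemma uniform_limit_geometric_steps:
  fixes y :: "nat \<Rightarrow> 'a \<Rightarrow> 'b::banach"
  assumes "\<And>z. y 0 z = 0" and steps: "\<And>k z. z \<in> S \<Longrightarrow> norm (y (Suc k) z - y k z) \<le> d * (1/2)^k"
  shows "uniform_limit S y (\<lambda>z. \<Sum>k. y (Suc k) z - y k z) sequentially"
proof -
  have "uniform_limit S (\<lambda>n z. \<Sum>k<n. y (Suc k) z - y k z) (\<lambda>z. \<Sum>k. y (Suc k) z - y k z) sequentially"
    by (rule Weierstrass_m_test[where M="\<lambda>k. d * (1/2)^k"]) (simp_all add: steps)
  moreover have "(\<Sum>k<n. y (Suc k) z - y k z) = y n z" for n z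
    using sum_lessThan_telescope[of "\<lambda>k. y k z" n] assms(1) by simp
  ultimately show ?thesis
    by simp
qed

lemma holomorphic_on_uniform_limit_vec:
  fixes y :: "nat \<Rightarrow> complex \<Rightarrow> complex^'m"
  assumes "open S" and "\<And>k i. (\<lambda>z. y k z $ i) holomorphic_on S" and lim: "uniform_limit S y Y sequentially"
  shows "(\<lambda>z. Y z $ i) holomorphic_on S"
proof (rule holomorphic_uniform_sequence[where f="\<lambda>k z. y k z $ i"])
  have lim_i: "uniform_limit S (\<lambda>k z. y k z $ i) (\<lambda>z. Y z $ i) sequentially"
    by (rule bounded_linear.uniform_limit[OF bounded_linear_vec_nth lim])
  fix z
  assume "z \<in> S"
  then obtain r where "r > 0" "cball z r \<subseteq> S"
    using open_contains_cball_eq[OF \<open>open S\<close>] by blast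
  with uniform_limit_on_subset[OF lim_i] show "\<exists>r. 0 < r \<and> cball z r \<subseteq> S \<and>
      uniform_limit (cball z r) (\<lambda>k z. y k z $ i) (\<lambda>z. Y z $ i) sequentially"
    by blast
qed (use assms in simp_all)

lemma limit_of_lipschitz_iterates:
  fixes y :: "nat \<Rightarrow> 'a::real_normed_vector"
  assumes iterate: "\<And>k. y (Suc k) = T (y k)" and lim: "y \<longlonglongrightarrow> Y"
    and lipschitz: "\<And>k. norm (T (y k) - T Y) \<le> L * norm (y k - Y)"
  shows "Y = T Y"
proof -
  have "(\<lambda>k. T (y k) - T Y) \<longlonglongrightarrow> 0"
  proof (rule Lim_null_comparison)
    show "\<forall>\<^sub>F k in sequentially. norm (T (y k) - T Y) \<le> L * norm (y k - Y)"
      by (intro always_eventually allI lipschitz)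
    show "(\<lambda>k. L * norm (y k - Y)) \<longlonglongrightarrow> 0"
      by (intro tendsto_mult_right_zero tendsto_norm_zero LIM_zero lim)
  qed
  then have "(\<lambda>k. y (Suc k)) \<longlonglongrightarrow> T Y"
    unfolding iterate by (rule LIM_zero_cancel)
  then show ?thesis
    by (rule LIMSEQ_unique[OF LIMSEQ_Suc[OF lim]])
qed

lemma holomorphic_parametric_fixed_point:
  fixes T :: "complex \<Rightarrow> complex^'m \<Rightarrow> complex^'m"
  assumes "0 \<le> d"
    and maps: "\<And>z y. z \<in> ball 0 e \<Longrightarrow> norm y \<le> d \<Longrightarrow> norm (T z y) \<le> d"
    and contracts: "\<And>z y y'. z \<in> ball 0 e \<Longrightarrow> norm y \<le> d \<Longrightarrow> norm y' \<le> d \<Longrightarrow>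
        norm (T z y - T z y') \<le> 1/2 * norm (y - y')"
    and holomorphic: "\<And>y i. (\<And>i. (\<lambda>z. y z $ i) holomorphic_on ball 0 e) \<Longrightarrow>
        (\<lambda>z. T z (y z) $ i) holomorphic_on ball 0 e"
  obtains Y where "\<And>i. (\<lambda>z. Y z $ i) holomorphic_on ball 0 e"
    and "\<And>z. z \<in> ball 0 e \<Longrightarrow> Y z = T z (Y z) \<and> norm (Y z) \<le> d"
proof -
  define y where "y k z = (T z ^^ k) 0" for k z
  have y_Suc: "y (Suc k) z = T z (y k z)" for k z
    by (simp add: y_def)
  have y_bound: "norm (y k z) \<le> d" if "z \<in> ball 0 e" for k z
  proof (induction k)
    case 0
    show ?case
      by (simp add: y_def \<open>0 \<le> d\<close>)
  next
    case (Suc k)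
    then show ?case
      by (simp add: y_Suc maps[OF that])
  qed
  have y_step: "norm (y (Suc k) z - y k z) \<le> d * (1/2)^k" if z: "z \<in> ball 0 e" for k z
  proof (induction k)
    case 0
    show ?case
      using maps[OF z, of 0] \<open>0 \<le> d\<close> by (simp add: y_def)
  next
    case (Suc k)
    have "y (Suc (Suc k)) z - y (Suc k) z = T z (y (Suc k) z) - T z (y k z)"
      by (simp only: y_Suc)
    then have "norm (y (Suc (Suc k)) z - y (Suc k) z) \<le> 1/2 * norm (y (Suc k) z - y k z)"
      using contracts[OF z y_bound[OF z] y_bound[OF z]] by simp
    with Suc show ?case
      by simp
  qed
  have y_holomorphic: "(\<lambda>z. y k z $ i) holomorphic_on ball 0 e" for k i
  proof (induction k arbitrary: i)
    case 0
    show ?case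
      by (simp add: y_def)
  next
    case (Suc k)
    show ?case
      unfolding y_Suc by (rule holomorphic) (rule Suc)
  qed
  define Y where "Y z = (\<Sum>k. y (Suc k) z - y k z)" for z
  have lim: "uniform_limit (ball 0 e) y Y sequentially"
    unfolding Y_def by (rule uniform_limit_geometric_steps[where d=d]) (simp_all add: y_def[of 0] y_step)
  have "(\<lambda>z. Y z $ i) holomorphic_on ball 0 e" for i
    by (rule holomorphic_on_uniform_limit_vec[OF open_ball y_holomorphic lim])
  moreover have "Y z = T z (Y z) \<and> norm (Y z) \<le> d" if z: "z \<in> ball 0 e" for z
  proof -
    have y_lim: "(\<lambda>k. y k z) \<longlonglongrightarrow> Y z"
      by (rule tendsto_uniform_limitI[OF lim z])
    then have "norm (Y z) \<le> d"
      using y_bound[OF z] by (intro LIMSEQ_le_const2[OF tendsto_norm[OF y_lim]]) simp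
    moreover have "Y z = T z (Y z)"
      using y_lim contracts[OF z y_bound[OF z] \<open>norm (Y z) \<le> d\<close>]
      by (intro limit_of_lipschitz_iterates[where y="\<lambda>k. y k z" and T="T z" and L="1/2"])
        (simp_all add: y_Suc)
    ultimately show ?thesis
      by simp
  qed
  ultimately show ?thesis
    by (rule that)
qed

lemma perturbed_fixed_point_quadratic_bound:
  fixes y c e :: "complex^'m"
  assumes "0 \<le> K" and fixed: "y = z *s c + e"
    and e_bound: "norm e \<le> K * (norm z + norm y) * norm y" and small: "K * (norm z + norm y) \<le> 1/2"
  shows "norm (y - z *s c) \<le> 2 * K * (1 + 2 * norm c) * norm c * (norm z)^2"
proof -
  have "norm e \<le> 1/2 * norm y"
    using e_bound small by (meson mult_right_mono norm_ge_zero order_trans)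
  moreover have "norm y \<le> norm z * norm c + norm e"
    using fixed norm_triangle_ineq[of "z *s c" e] by (simp add: norm_smult_vec)
  ultimately have y_bound: "norm y \<le> 2 * norm z * norm c"
    by simp
  have "K * (norm z + norm y) \<le> K * (norm z + 2 * norm z * norm c)"
    using y_bound \<open>0 \<le> K\<close> by (intro mult_left_mono) auto
  then have "K * (norm z + norm y) * norm y \<le> K * (norm z + 2 * norm z * norm c) * (2 * norm z * norm c)"
    using y_bound \<open>0 \<le> K\<close> by (intro mult_mono) auto
  then have "norm e \<le> 2 * K * (1 + 2 * norm c) * norm c * (norm z)^2"
    using e_bound by (simp add: algebra_simps power2_eq_square)
  then show ?thesis
    using fixed by simp
qed

lemma perturbation_radii:
  fixes K b :: real
  assumes "0 \<le> K" and "0 \<le> b"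
  obtains d e where "0 < e" and "e \<le> d" and "d \<le> 1" and "K * (3 * d) \<le> 1/2" and "e * b \<le> d / 2"
proof -
  define d where "d = 1 / (6 * K + 2)"
  define e where "e = d / (2 * (b + 1))"
  have d: "0 < d" "d \<le> 1" "K * (3 * d) \<le> 1/2"
    using \<open>0 \<le> K\<close> by (auto simp: d_def field_simps)
  have "0 < e" and "e * (2 * (b + 1)) = d"
    using d \<open>0 \<le> b\<close> by (simp_all add: e_def)
  moreover have "0 \<le> e * b"
    using \<open>0 < e\<close> \<open>0 \<le> b\<close> by simp
  ultimately have "e \<le> d" "e * b \<le> d / 2"
    by (simp_all add: algebra_simps)
  with \<open>0 < e\<close> d show ?thesis
    by (intro that) auto
qed

lemma perturbed_map_contraction:
  fixes c :: "complex^'m" and E :: "complex \<Rightarrow> complex^'m \<Rightarrow> complex^'m"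
  assumes E0: "\<And>z. E z 0 = 0"
    and lipschitz: "\<And>z y y'. norm z \<le> 1 \<Longrightarrow> norm y \<le> 1 \<Longrightarrow> norm y' \<le> 1 \<Longrightarrow>
        norm (E z y - E z y') \<le> K * (norm z + norm y + norm y') * norm (y - y')"
    and radii: "norm z \<le> e" "e \<le> d" "d \<le> 1" "0 \<le> K" "K * (3 * d) \<le> 1/2" "e * norm c \<le> d / 2"
  shows small: "\<And>(y :: complex^'m) (y' :: complex^'m). norm y \<le> d \<Longrightarrow> norm y' \<le> d \<Longrightarrow>
      K * (norm z + norm y + norm y') \<le> 1/2"
    and contracts: "\<And>y y'. norm y \<le> d \<Longrightarrow> norm y' \<le> d \<Longrightarrow> norm (E z y - E z y') \<le> 1/2 * norm (y - y')"
    and maps: "\<And>y. norm y \<le> d \<Longrightarrow> norm (z *s c + E z y) \<le> d"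
proof -
  show small: "K * (norm z + norm y + norm y') \<le> 1/2"
    if "norm y \<le> d" "norm y' \<le> d" for y y' :: "complex^'m"
  proof -
    have "K * (norm z + norm y + norm y') \<le> K * (3 * d)"
      using that radii by (intro mult_left_mono) auto
    with radii show ?thesis
      by linarith
  qed
  show contracts: "norm (E z y - E z y') \<le> 1/2 * norm (y - y')"
    if "norm y \<le> d" "norm y' \<le> d" for y y' :: "complex^'m"
  proof -
    have "norm (E z y - E z y') \<le> K * (norm z + norm y + norm y') * norm (y - y')"
      using that radii by (intro lipschitz) auto
    also have "\<dots> \<le> 1/2 * norm (y - y')"
      using small[OF that] by (intro mult_right_mono) auto
    finally show ?thesis .
  qed
  show "norm (z *s c + E z y) \<le> d" if "norm y \<le> d" for y
  proof -
    have "0 \<le> d"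
      using that norm_ge_zero order_trans by blast
    have "norm (z *s c + E z y) \<le> norm z * norm c + norm (E z y - E z 0)"
      using norm_triangle_ineq[of "z *s c" "E z y"] by (simp add: E0 norm_smult_vec)
    also have "\<dots> \<le> e * norm c + 1/2 * d"
      using contracts[OF that, of 0] that radii \<open>0 \<le> d\<close> by (intro add_mono mult_right_mono) auto
    finally show ?thesis
      using radii by simp
  qed
qed

lemma holomorphic_perturbed_fixed_point:
  fixes c :: "complex^'m" and E :: "complex \<Rightarrow> complex^'m \<Rightarrow> complex^'m"
  assumes "0 \<le> K"
    and E0: "\<And>z. E z 0 = 0"
    and lipschitz: "\<And>z y y'. norm z \<le> 1 \<Longrightarrow> norm y \<le> 1 \<Longrightarrow> norm y' \<le> 1 \<Longrightarrow>
        norm (E z y - E z y') \<le> K * (norm z + norm y + norm y') * norm (y - y')"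
    and holomorphic: "\<And>y S i. (\<And>i. (\<lambda>z. y z $ i) holomorphic_on S) \<Longrightarrow>
        (\<lambda>z. E z (y z) $ i) holomorphic_on S"
  obtains e Y C where "e > 0" and "\<And>i. (\<lambda>z. Y z $ i) holomorphic_on ball 0 e"
    and "\<And>z. z \<in> ball 0 e \<Longrightarrow> Y z = z *s c + E z (Y z)"
    and "\<And>z. z \<in> ball 0 e \<Longrightarrow> norm (Y z - z *s c) \<le> C * (norm z)^2"
proof -
  obtain d e where "0 < e" and radii: "e \<le> d" "d \<le> 1" "K * (3 * d) \<le> 1/2" "e * norm c \<le> d / 2"
    using perturbation_radii[OF \<open>0 \<le> K\<close> norm_ge_zero] by blast
  then have "0 \<le> d"
    using radii by simp
  have contraction: "K * (norm z + norm y + norm y') \<le> 1/2" "norm (E z y - E z y') \<le> 1/2 * norm (y - y')"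
    "norm (z *s c + E z y) \<le> d"
    if "z \<in> ball 0 e" "norm y \<le> d" "norm y' \<le> d" for z y y'
    using that radii \<open>0 \<le> K\<close>
    by (intro perturbed_map_contraction[where E=E] E0 lipschitz; simp)+
  obtain Y where Y_holomorphic: "\<And>i. (\<lambda>z. Y z $ i) holomorphic_on ball 0 e"
    and Y_fixed: "\<And>z. z \<in> ball 0 e \<Longrightarrow> Y z = z *s c + E z (Y z) \<and> norm (Y z) \<le> d"
  proof (rule holomorphic_parametric_fixed_point[where T="\<lambda>z y. z *s c + E z y"])
    show "0 \<le> d"
      by fact
    show "norm (z *s c + E z y) \<le> d" if "z \<in> ball 0 e" "norm y \<le> d" for z y
      using contraction(3)[OF that that(2)] .
    show "norm (z *s c + E z y - (z *s c + E z y')) \<le> 1/2 * norm (y - y')"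
      if "z \<in> ball 0 e" "norm y \<le> d" "norm y' \<le> d" for z y y'
      using contraction(2)[OF that] by simp
    show "(\<lambda>z. (z *s c + E z (y z)) $ i) holomorphic_on ball 0 e"
      if "\<And>i. (\<lambda>z. y z $ i) holomorphic_on ball 0 e" for y i
      using holomorphic[OF that] by (simp add: holomorphic_on_add holomorphic_on_mult)
  qed (rule that)
  have "norm (Y z - z *s c) \<le> 2 * K * (1 + 2 * norm c) * norm c * (norm z)^2" if "z \<in> ball 0 e" for z
    using Y_fixed[OF that] lipschitz[of z "Y z" 0] contraction(1)[OF that, of "Y z" 0] radii that \<open>0 \<le> d\<close>
    by (intro perturbed_fixed_point_quadratic_bound[OF \<open>0 \<le> K\<close>]) (auto simp: E0)
  with \<open>0 < e\<close> Y_holomorphic Y_fixed show ?thesis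
    by (intro that) auto
qed

definition quadratic_remainder ::
    "(complex^'m \<Rightarrow> complex^'m \<Rightarrow> complex^'m) \<Rightarrow> (complex^'m \<Rightarrow> complex^'m \<Rightarrow> complex^'m) \<Rightarrow>
     (complex^'m \<Rightarrow> complex^'m) \<Rightarrow> complex^'m \<Rightarrow> complex \<Rightarrow> complex^'m \<Rightarrow> complex^'m" where
  "quadratic_remainder B0 B1 L1 x0 z y = B0 y y + z *s (B1 x0 y + B1 y x0 + B1 y y + L1 y)"

lemma quadratic_expansion:
  assumes "vec_bilinear B0" "vec_bilinear B1" "vec_linear L0" "vec_linear L1"
  shows "B0 (x0 + y) (x0 + y) + L0 (x0 + y) + f0 + z *s (B1 (x0 + y) (x0 + y) + L1 (x0 + y))
       = (B0 x0 x0 + L0 x0 + f0) + (B0 x0 y + B0 y x0 + L0 y) + z *s (B1 x0 x0 + L1 x0)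
         + quadratic_remainder B0 B1 L1 x0 z y"
  using vec_bilinear_imp_bilinear[OF assms(1)] vec_bilinear_imp_bilinear[OF assms(2)]
  by (simp add: quadratic_remainder_def bilinear_ladd bilinear_radd vec.linear_add[OF assms(3)]
      vec.linear_add[OF assms(4)] algebra_simps)

lemma quadratic_remainder_holomorphic:
  assumes "vec_bilinear B0" "vec_bilinear B1" "vec_linear L1"
    and y: "\<And>i. (\<lambda>z. y z $ i) holomorphic_on S"
  shows "(\<lambda>z. quadratic_remainder B0 B1 L1 x0 z (y z) $ i) holomorphic_on S"
proof -
  have x0: "(\<lambda>z. x0 $ i) holomorphic_on S" for i
    by simp
  show ?thesis
    unfolding quadratic_remainder_def
    by (simp, intro holomorphic_on_add holomorphic_on_mult holomorphic_on_ident
        vec_bilinear_holomorphic[OF assms(1)] vec_bilinear_holomorphic[OF assms(2)]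
        vec_linear_holomorphic[OF assms(3)] x0 y)
qed

lemma quadratic_remainder_lipschitz:
  fixes B0 B1 :: "complex^'m \<Rightarrow> complex^'m \<Rightarrow> complex^'m" and L1 :: "complex^'m \<Rightarrow> complex^'m"
  assumes "bilinear B0" "bilinear B1" "linear L1"
  obtains K where "0 \<le> K" and "\<And>z y y'. norm z \<le> 1 \<Longrightarrow>
      norm (quadratic_remainder B0 B1 L1 x0 z y - quadratic_remainder B0 B1 L1 x0 z y')
        \<le> K * (norm z + norm y + norm y') * norm (y - y')"
proof -
  obtain K0 where "K0 > 0" and K0: "\<And>x y. norm (B0 x y) \<le> K0 * norm x * norm y"
    using bilinear_bounded_pos[OF assms(1)] by blast
  obtain K1 where "K1 > 0" and K1: "\<And>x y. norm (B1 x y) \<le> K1 * norm x * norm y"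
    using bilinear_bounded_pos[OF assms(2)] by blast
  obtain KL where "KL > 0" and KL: "\<And>x. norm (L1 x) \<le> KL * norm x"
    using linear_bounded_pos[OF assms(3)] by blast
  define K where "K = K0 + K1 + 2 * K1 * norm x0 + KL"
  show ?thesis
  proof (rule that)
    show "0 \<le> K"
      using \<open>K0 > 0\<close> \<open>K1 > 0\<close> \<open>KL > 0\<close> by (simp add: K_def)
    fix z :: complex and y y' :: "complex^'m"
    assume z: "norm z \<le> 1"
    define h where "h = y - y'"
    define p where "p = norm y + norm y'"
    have "norm (B1 x0 h + B1 h x0 + (B1 y y - B1 y' y') + L1 h)
        \<le> norm (B1 x0 h) + norm (B1 h x0) + norm (B1 y y - B1 y' y') + norm (L1 h)"
      using norm_triangle_ineq[of "B1 x0 h + B1 h x0 + (B1 y y - B1 y' y')" "L1 h"]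
        norm_triangle_ineq[of "B1 x0 h + B1 h x0" "B1 y y - B1 y' y'"]
        norm_triangle_ineq[of "B1 x0 h" "B1 h x0"] by linarith
    also have "\<dots> \<le> (2 * K1 * norm x0 + KL) * norm h + K1 * p * norm h"
      using K1[of x0 h] K1[of h x0] KL[of h] bilinear_diag_diff_le[OF assms(2) K1, of y y']
      by (simp add: h_def p_def algebra_simps)
    finally have bracket: "norm (B1 x0 h + B1 h x0 + (B1 y y - B1 y' y') + L1 h)
        \<le> (2 * K1 * norm x0 + KL) * norm h + K1 * p * norm h" .
    have "quadratic_remainder B0 B1 L1 x0 z y - quadratic_remainder B0 B1 L1 x0 z y'
        = (B0 y y - B0 y' y') + z *s (B1 x0 h + B1 h x0 + (B1 y y - B1 y' y') + L1 h)"
      using assms unfolding quadratic_remainder_def h_def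
      by (simp add: bilinear_rsub bilinear_lsub linear_diff algebra_simps)
    then have "norm (quadratic_remainder B0 B1 L1 x0 z y - quadratic_remainder B0 B1 L1 x0 z y')
        \<le> norm (B0 y y - B0 y' y') + norm z * norm (B1 x0 h + B1 h x0 + (B1 y y - B1 y' y') + L1 h)"
      by (metis norm_smult_vec norm_triangle_ineq)
    also have "\<dots> \<le> K0 * p * norm h + norm z * ((2 * K1 * norm x0 + KL) * norm h + K1 * p * norm h)"
      using bilinear_diag_diff_le[OF assms(1) K0, of y y'] bracket
      unfolding p_def h_def by (intro add_mono mult_left_mono) auto
    also have "\<dots> \<le> K0 * p * norm h + norm z * ((2 * K1 * norm x0 + KL) * norm h) + K1 * p * norm h"
      using z \<open>K1 > 0\<close> by (simp add: distrib_left mult_left_le_one_le p_def)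
    also have "\<dots> \<le> K * (norm z + p) * norm h"
      using \<open>K0 > 0\<close> \<open>K1 > 0\<close> \<open>KL > 0\<close> by (simp add: K_def p_def algebra_simps)
    finally show "norm (quadratic_remainder B0 B1 L1 x0 z y - quadratic_remainder B0 B1 L1 x0 z y')
        \<le> K * (norm z + norm y + norm y') * norm (y - y')"
      by (simp add: p_def h_def add.assoc)
  qed
qed

lemma vec_linear_right_inverse:
  fixes J :: "'a::field^'m \<Rightarrow> 'a^'m"
  assumes "vec_linear J" and "\<And>y. J y = 0 \<Longrightarrow> y = 0"
  obtains G where "vec_linear G" and "\<And>v. J (G v) = v"
proof -
  have "inj J"
    using assms by (simp add: vec.linear_inj_iff_eq_0)
  then have "surj J"
    by (rule vec.linear_inj_imp_surj[OF assms(1)])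
  then obtain G where "vec_linear G" "J \<circ> G = id"
    using vec.linear_surjective_right_inverse[OF assms(1)] by blast
  then show ?thesis
    using that by (simp add: fun_eq_iff)
qed

lemma fixed_point_solves_quadratic_system:
  assumes B0: "vec_bilinear B0" and B1: "vec_bilinear B1" and L0: "vec_linear L0" and L1: "vec_linear L1"
    and root: "B0 x0 x0 + L0 x0 + f0 = 0"
    and inverse: "\<And>v. B0 x0 (G v) + B0 (G v) x0 + L0 (G v) = v"
    and fixed: "y = - z *s G (B1 x0 x0 + L1 x0) - G (quadratic_remainder B0 B1 L1 x0 z y)"
  shows "B0 (x0 + y) (x0 + y) + L0 (x0 + y) + f0 + z *s (B1 (x0 + y) (x0 + y) + L1 (x0 + y)) = 0"
proof -
  define J where "J y = B0 x0 y + B0 y x0 + L0 y" for y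
  have "vec_linear J"
    using B0 L0 unfolding J_def vec_bilinear_def by (intro vec.linear_compose_add) auto
  then have "J y = - z *s (B1 x0 x0 + L1 x0) - quadratic_remainder B0 B1 L1 x0 z y"
    by (subst fixed) (simp add: vec.linear_diff vec.linear_scale vec.linear_neg inverse[folded J_def])
  then show ?thesis
    unfolding quadratic_expansion[OF B0 B1 L0 L1] root J_def[symmetric] by simp
qed

lemma quadratic_system_holomorphic_solution:
  fixes B0 B1 :: "complex^'m \<Rightarrow> complex^'m \<Rightarrow> complex^'m" and L0 L1 :: "complex^'m \<Rightarrow> complex^'m"
  assumes B0: "vec_bilinear B0" and B1: "vec_bilinear B1" and L0: "vec_linear L0" and L1: "vec_linear L1"
    and root: "B0 x0 x0 + L0 x0 + f0 = 0"
    and nondegenerate: "\<And>y. B0 x0 y + B0 y x0 + L0 y = 0 \<Longrightarrow> y = 0"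
  obtains e X c C where "e > 0" and "\<And>i. (\<lambda>z. X z $ i) holomorphic_on ball 0 e"
    and "\<And>z. z \<in> ball 0 e \<Longrightarrow> B0 (X z) (X z) + L0 (X z) + f0 + z *s (B1 (X z) (X z) + L1 (X z)) = 0"
    and "B0 x0 c + B0 c x0 + L0 c + (B1 x0 x0 + L1 x0) = 0"
    and "\<And>z. z \<in> ball 0 e \<Longrightarrow> norm (X z - x0 - z *s c) \<le> C * (norm z)^2"
proof -
  define J where "J y = B0 x0 y + B0 y x0 + L0 y" for y
  have "vec_linear J"
    using B0 L0 unfolding J_def vec_bilinear_def by (intro vec.linear_compose_add) auto
  moreover have "J y = 0 \<Longrightarrow> y = 0" for y
    unfolding J_def by (rule nondegenerate)
  ultimately obtain G where G: "vec_linear G" "\<And>v. J (G v) = v"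
    using vec_linear_right_inverse by blast
  obtain KG where "0 < KG" and KG: "\<And>v. norm (G v) \<le> KG * norm v"
    using linear_bounded_pos[OF vec_linear_imp_linear[OF G(1)]] by blast
  let ?N = "quadratic_remainder B0 B1 L1 x0"
  obtain K where "0 \<le> K" and N_lipschitz: "\<And>z y y'. norm z \<le> 1 \<Longrightarrow>
      norm (?N z y - ?N z y') \<le> K * (norm z + norm y + norm y') * norm (y - y')"
    using quadratic_remainder_lipschitz[OF vec_bilinear_imp_bilinear[OF B0]
      vec_bilinear_imp_bilinear[OF B1] vec_linear_imp_linear[OF L1]] by blast
  define E where "E z y = - G (?N z y)" for z y
  define c where "c = - G (B1 x0 x0 + L1 x0)"
  have E_lipschitz: "norm (E z y - E z y') \<le> (KG * K) * (norm z + norm y + norm y') * norm (y - y')"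
    if "norm z \<le> 1" "norm y \<le> 1" "norm y' \<le> 1" for z y y'
  proof -
    have "E z y - E z y' = - G (?N z y - ?N z y')"
      by (simp add: E_def vec.linear_diff[OF G(1)])
    then have "norm (E z y - E z y') \<le> KG * norm (?N z y - ?N z y')"
      using KG by simp
    also have "\<dots> \<le> KG * (K * (norm z + norm y + norm y') * norm (y - y'))"
      using N_lipschitz[OF that(1)] \<open>0 < KG\<close> by (intro mult_left_mono) auto
    finally show ?thesis
      by (simp add: mult.assoc)
  qed
  have E0: "E z 0 = 0" for z
    using vec_bilinear_imp_bilinear[OF B0] vec_bilinear_imp_bilinear[OF B1]
    by (simp add: E_def quadratic_remainder_def bilinear_lzero bilinear_rzero
        vec.linear_0[OF L1] vec.linear_0[OF G(1)])
  have E_holomorphic: "(\<lambda>z. E z (y z) $ i) holomorphic_on S"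
    if "\<And>i. (\<lambda>z. y z $ i) holomorphic_on S" for y :: "complex \<Rightarrow> complex^'m" and S i
    unfolding E_def vector_uminus_component
    by (intro holomorphic_on_minus vec_linear_holomorphic[OF G(1)]
        quadratic_remainder_holomorphic[OF B0 B1 L1 that])
  have "0 \<le> KG * K"
    using \<open>0 < KG\<close> \<open>0 \<le> K\<close> by simp
  then obtain e Y C where "e > 0" and Y_holomorphic: "\<And>i. (\<lambda>z. Y z $ i) holomorphic_on ball 0 e"
    and Y_fixed: "\<And>z. z \<in> ball 0 e \<Longrightarrow> Y z = z *s c + E z (Y z)"
    and Y_quadratic: "\<And>z. z \<in> ball 0 e \<Longrightarrow> norm (Y z - z *s c) \<le> C * (norm z)^2"
    using holomorphic_perturbed_fixed_point[OF _ E0 E_lipschitz E_holomorphic] by blast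
  have J_c: "J c = - (B1 x0 x0 + L1 x0)"
    by (simp add: c_def G vec.linear_neg[OF \<open>vec_linear J\<close>])
  show ?thesis
  proof (rule that[of e "\<lambda>z. x0 + Y z" c C])
    show "(\<lambda>z. (x0 + Y z) $ i) holomorphic_on ball 0 e" for i
      using Y_holomorphic by (simp add: holomorphic_on_add)
    fix z :: complex
    assume z: "z \<in> ball 0 e"
    show "B0 (x0 + Y z) (x0 + Y z) + L0 (x0 + Y z) + f0
        + z *s (B1 (x0 + Y z) (x0 + Y z) + L1 (x0 + Y z)) = 0"
      using Y_fixed[OF z] G(2)
      by (intro fixed_point_solves_quadratic_system[OF B0 B1 L0 L1 root]) (simp_all add: J_def E_def c_def)
    show "norm (x0 + Y z - x0 - z *s c) \<le> C * (norm z)^2"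
      using Y_quadratic[OF z] by simp
  qed (use \<open>e > 0\<close> J_c in \<open>simp_all add: J_def\<close>)
qed

lemma quadratic_bound_imp_linear_bound:
  fixes x x0 c :: "complex^'m"
  assumes quadratic: "norm (x - x0 - z *s c) \<le> C * (norm z)^2" and "norm z \<le> e"
  shows "norm (x - x0) \<le> (max C 0 * e + norm c) * norm z"
proof -
  have "norm (x - x0) \<le> norm (x - x0 - z *s c) + norm (z *s c)"
    using norm_triangle_ineq[of "x - x0 - z *s c" "z *s c"] by simp
  also have "\<dots> \<le> C * (norm z)^2 + norm z * norm c"
    using quadratic by (simp add: norm_smult_vec)
  also have "C * (norm z)^2 \<le> max C 0 * e * norm z"
  proof -
    have "C * (norm z)^2 \<le> max C 0 * (norm z * norm z)"
      unfolding power2_eq_square by (intro mult_right_mono) auto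
    also have "\<dots> \<le> max C 0 * (e * norm z)"
      using \<open>norm z \<le> e\<close> by (intro mult_left_mono mult_right_mono) auto
    finally show ?thesis
      by (simp add: mult.assoc)
  qed
  finally show ?thesis
    by (simp add: algebra_simps)
qed

section \<open>Exponential solutions of the linear system\<close>

lemma matrix_inv_right: "invertible (A::'a::field^'n^'n) \<Longrightarrow> A ** matrix_inv A = mat 1"
  and matrix_inv_left: "invertible (A::'a::field^'n^'n) \<Longrightarrow> matrix_inv A ** A = mat 1"
  unfolding invertible_def matrix_inv_def by (metis (mono_tags, lifting) someI_ex)+

lemma matrix_inv_cancel:
  assumes "invertible (A::'a::field^'n^'n)"
  shows "A *v (matrix_inv A *v x) = x" and "matrix_inv A *v (A *v x) = x"
  by (simp_all add: matrix_vector_mul_assoc matrix_inv_right[OF assms] matrix_inv_left[OF assms])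

lemma invertible_if_kernel_trivial:
  fixes A :: "'a::field^'n^'n"
  assumes "\<And>x. A *v x = 0 \<Longrightarrow> x = 0"
  shows "invertible A"
  using assms invertible_left_inverse matrix_left_invertible_ker by blast

lemma matrix_inv_eqI:
  fixes A :: "'a::field^'n^'n"
  assumes "A ** B = mat 1"
  shows "matrix_inv A = B"
proof -
  have "invertible A"
    using assms invertible_right_inverse by blast
  then have "matrix_inv A = matrix_inv A ** (A ** B)"
    using assms by simp
  also have "\<dots> = B"
    by (simp add: matrix_mul_assoc matrix_inv_left[OF \<open>invertible A\<close>])
  finally show ?thesis .
qed

lemma bounded_linear_smult_vec: "bounded_linear (\<lambda>c::complex. c *s (V::complex^'m))"
proof (rule bounded_linear_intro[where K="norm V"])
  show "(x + y) *s V = x *s V + y *s V" for x y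
    by (simp add: vec_eq_iff algebra_simps)
  show "(r *\<^sub>R x) *s V = r *\<^sub>R (x *s V)" for r x
    by (simp add: vec_eq_iff)
  show "norm (x *s V) \<le> norm x * norm V" for x
    by (simp add: norm_smult_vec)
qed

lemma bounded_linear_matrix_vector_mult: "bounded_linear (\<lambda>x. (M::complex^'m^'n) *v x)"
  using linear_conv_bounded_linear vec_linear_imp_linear[OF matrix_vector_mul_linear_gen] by blast

lemma has_vector_derivative_exp_mult:
  "((\<lambda>x. exp (\<mu> * complex_of_real x)) has_vector_derivative \<mu> * exp (\<mu> * complex_of_real x)) (at x)"
proof -
  have "((\<lambda>w. exp (\<mu> * w)) has_field_derivative \<mu> * exp (\<mu> * complex_of_real x)) (at (complex_of_real x))"
    by (auto intro!: derivative_eq_intros)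
  then show ?thesis
    by (rule has_vector_derivative_real_field)
qed

lemma scalar_linear_ode_solution:
  fixes c :: "real \<Rightarrow> complex"
  assumes "\<And>x. (c has_vector_derivative m * c x) (at x)"
  shows "c x = exp (m * complex_of_real x) * c 0"
proof -
  define g where "g x = exp (- m * complex_of_real x) * c x" for x
  have "(g has_vector_derivative 0) (at x)" for x
  proof -
    have "(g has_vector_derivative exp (- m * complex_of_real x) * (m * c x)
        + - m * exp (- m * complex_of_real x) * c x) (at x)"
      unfolding g_def by (intro has_vector_derivative_mult has_vector_derivative_exp_mult assms)
    then show ?thesis
      by (simp add: algebra_simps)
  qed
  then obtain C where "g x = C" for x
    using has_vector_derivative_zero_constant[of UNIV g] by auto
  then have "exp (- m * complex_of_real x) * c x = c 0"
    by (metis g_def mult_1 mult_zero_right exp_zero of_real_0)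
  then show ?thesis
    by (simp add: exp_minus field_simps)
qed

lemma exp_mode_in_odesols:
  assumes "Q *v V - lam *s V - \<mu> *s (A *v V) = 0"
  shows "(\<lambda>x. exp (\<mu> * complex_of_real x) *s V) \<in> odesols A Q lam"
  unfolding odesols_def
proof (intro CollectI allI exI conjI)
  fix x :: real
  let ?e = "exp (\<mu> * complex_of_real x)"
  show "((\<lambda>x. exp (\<mu> * complex_of_real x) *s V) has_vector_derivative (\<mu> * ?e) *s V) (at x)"
    by (rule bounded_linear.has_vector_derivative[OF bounded_linear_smult_vec has_vector_derivative_exp_mult])
  have "- (A *v ((\<mu> * ?e) *s V)) + (Q *v (?e *s V) - lam *s (?e *s V))
      = ?e *s (Q *v V - lam *s V - \<mu> *s (A *v V))"
    by (simp add: vec.scale vec_eq_iff algebra_simps)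
  then show "- (A *v ((\<mu> * ?e) *s V)) + (Q *v (?e *s V) - lam *s (?e *s V)) = 0"
    by (simp add: assms)
qed

lemma odesols_derivative:
  assumes "invertible A" and "W \<in> odesols A Q lam"
  shows "(W has_vector_derivative matrix_inv A *v (Q *v W x - lam *s W x)) (at x)"
proof -
  obtain D where D: "(W has_vector_derivative D) (at x)" and "- (A *v D) + (Q *v W x - lam *s W x) = 0"
    using assms(2) unfolding odesols_def by blast
  then have "A *v D = Q *v W x - lam *s W x"
    by (simp add: algebra_simps)
  then have "D = matrix_inv A *v (Q *v W x - lam *s W x)"
    by (metis matrix_inv_cancel(2)[OF assms(1)])
  with D show ?thesis
    by simp
qed

lemma odesols_eigenmode_expansion:
  fixes A Q :: "complex^('n::finite + 'r::finite)^('n + 'r)" and V :: "'k \<Rightarrow> complex^('n + 'r)"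
    and h :: "'n + 'r \<Rightarrow> 'k"
  assumes "invertible A" and eig: "\<And>k. Q *v V k - lam *s V k - \<mu> k *s (A *v V k) = 0"
    and "bij h" and invertible_P: "invertible (\<chi> i j. V (h j) $ i)" and W: "W \<in> odesols A Q lam"
  shows "\<exists>c. \<forall>x. W x = (\<Sum>k\<in>UNIV. c k *s (exp (\<mu> k * complex_of_real x) *s V k))"
proof -
  define P :: "complex^('n + 'r)^('n + 'r)" where "P = (\<chi> i j. V (h j) $ i)"
  have P_mult: "P *v y = (\<Sum>j\<in>UNIV. y $ j *s V (h j))" for y
    by (simp add: P_def matrix_mult_sum column_def)
  define c where "c x = matrix_inv P *v W x" for x
  have W_c: "W x = P *v c x" for x
    by (simp add: c_def matrix_inv_cancel(1)[OF invertible_P[folded P_def]])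
  have eigen: "matrix_inv A *v (Q *v V k - lam *s V k) = \<mu> k *s V k" for k
    using eig[of k] matrix_inv_cancel(2)[OF \<open>invertible A\<close>, of "\<mu> k *s V k"]
    by (simp add: vec.scale algebra_simps)
  have diagonal: "matrix_inv A *v (Q *v (P *v y) - lam *s (P *v y)) = P *v (\<chi> j. \<mu> (h j) * y $ j)"
    for y
  proof -
    have "Q *v (P *v y) - lam *s (P *v y) = (\<Sum>j\<in>UNIV. y $ j *s (Q *v V (h j) - lam *s V (h j)))"
      unfolding P_mult
      by (simp add: vec.sum vec.scale vec.scale_sum_right sum_subtractf mult.commute)
    then have "matrix_inv A *v (Q *v (P *v y) - lam *s (P *v y))
        = (\<Sum>j\<in>UNIV. y $ j *s (matrix_inv A *v (Q *v V (h j) - lam *s V (h j))))"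
      by (simp only: vec.sum vec.scale)
    also have "\<dots> = P *v (\<chi> j. \<mu> (h j) * y $ j)"
      unfolding eigen P_mult by (simp add: mult.commute)
    finally show ?thesis .
  qed
  have c_derivative: "(c has_vector_derivative (\<chi> j. \<mu> (h j) * c x $ j)) (at x)" for x
    using bounded_linear.has_vector_derivative[OF bounded_linear_matrix_vector_mult
        odesols_derivative[OF \<open>invertible A\<close> W, of x], of "matrix_inv P"]
    unfolding W_c diagonal c_def[symmetric]
    by (simp add: matrix_inv_cancel(2)[OF invertible_P[folded P_def]])
  have c_exp: "c x $ j = exp (\<mu> (h j) * complex_of_real x) * c 0 $ j" for x j
    using bounded_linear.has_vector_derivative[OF bounded_linear_vec_nth c_derivative]
    by (intro scalar_linear_ode_solution) simp
  have "W x = (\<Sum>j\<in>UNIV. c 0 $ j *s (exp (\<mu> (h j) * complex_of_real x) *s V (h j)))" for x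
    unfolding W_c P_mult c_exp[of x] by (simp add: mult.commute)
  also have "\<dots> x = (\<Sum>k\<in>UNIV. c 0 $ inv h k *s (exp (\<mu> k * complex_of_real x) *s V k))" for x
    using sum.reindex_bij_betw[of h UNIV UNIV "\<lambda>k. c 0 $ inv h k *s (exp (\<mu> k * complex_of_real x) *s V k)"]
      \<open>bij h\<close> by (simp add: bij_is_inj)
  finally show ?thesis
    by (intro exI[of _ "\<lambda>k. c 0 $ inv h k"] allI)
qed

lemma exp_modes_independent:
  fixes V :: "'k \<Rightarrow> complex^'m" and h :: "'m \<Rightarrow> 'k"
  assumes "bij h" and invertible_P: "invertible (\<chi> i j. V (h j) $ i)"
    and vanishing: "\<forall>x. (\<Sum>k\<in>UNIV. c k *s (exp (\<mu> k * complex_of_real x) *s V k)) = 0"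
  shows "c k = 0"
proof -
  have "(\<Sum>k\<in>UNIV. c k *s V k) = 0"
    using vanishing[rule_format, of 0] by simp
  then have "(\<chi> i j. V (h j) $ i) *v (\<chi> j. c (h j)) = 0"
    using sum.reindex_bij_betw[OF \<open>bij h\<close>, of "\<lambda>k. c k *s V k"]
    by (simp add: matrix_mult_sum column_def)
  then have "(\<chi> j. c (h j)) = 0"
    by (metis matrix_inv_cancel(2)[OF invertible_P] vec.zero)
  moreover obtain j where "k = h j"
    using \<open>bij h\<close> by (metis bij_pointE)
  ultimately show ?thesis
    by (simp add: vec_eq_iff)
qed

lemma exp_modes_fundamental_system:
  fixes A Q :: "complex^('n::finite + 'r::finite)^('n + 'r)" and V :: "'k \<Rightarrow> complex^('n + 'r)"
    and h :: "'n + 'r \<Rightarrow> 'k"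
  assumes "invertible A" and "\<And>k. Q *v V k - lam *s V k - \<mu> k *s (A *v V k) = 0"
    and "bij h" and "invertible (\<chi> i j. V (h j) $ i)"
  shows "(\<forall>k. (\<lambda>x. exp (\<mu> k * complex_of_real x) *s V k) \<in> odesols A Q lam) \<and>
     (\<forall>c. (\<forall>x. (\<Sum>k\<in>UNIV. c k *s (exp (\<mu> k * complex_of_real x) *s V k)) = 0) \<longrightarrow> (\<forall>k. c k = 0)) \<and>
     (\<forall>W\<in>odesols A Q lam. \<exists>c. \<forall>x. W x = (\<Sum>k\<in>UNIV. c k *s (exp (\<mu> k * complex_of_real x) *s V k)))"
  using exp_mode_in_odesols exp_modes_independent[OF assms(3,4)]
    odesols_eigenmode_expansion[OF assms] assms(2) by blast

text \<open>\<open>vcons \<mu> V\<close> packs the eigenvalue and the eigenvector into the single unknown of a quadratic system.\<close>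

definition vcons :: "'a \<Rightarrow> 'a^'b::finite \<Rightarrow> 'a^(unit + 'b)" where
  "vcons a V = (\<chi> i. case i of Inl _ \<Rightarrow> a | Inr j \<Rightarrow> V $ j)"

definition vhd :: "'a^(unit + 'b::finite) \<Rightarrow> 'a" where
  "vhd x = x $ Inl ()"

definition vtl :: "'a^(unit + 'b::finite) \<Rightarrow> 'a^'b" where
  "vtl x = (\<chi> j. x $ Inr j)"

lemma vhd_vcons [simp]: "vhd (vcons a V) = a"
  by (simp add: vhd_def vcons_def)

lemma vtl_vcons [simp]: "vtl (vcons a V) = V"
  by (simp add: vtl_def vcons_def vec_eq_iff)

lemma vcons_vhd_vtl: "vcons (vhd x) (vtl x) = x"
  by (simp add: vec_eq_iff vcons_def vhd_def vtl_def split: sum.split)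

lemma vcons_add [simp]: "vcons a V + vcons b W = vcons (a + b) (V + W)"
  and vcons_diff [simp]: "vcons a V - vcons b W = vcons (a - b) (V - W)"
  and vcons_uminus [simp]: "- vcons a V = vcons (- a) (- V)"
  and vcons_smult [simp]: "c *s vcons a V = vcons (c * a) (c *s V)"
  and vcons_zero [simp]: "vcons 0 0 = 0"
  and vcons_eq_0_iff [simp]: "vcons a V = 0 \<longleftrightarrow> a = 0 \<and> V = 0"
  by (auto simp: vec_eq_iff vcons_def split: sum.split)

lemma vhd_add [simp]: "vhd (x + y) = vhd x + vhd y"
  and vhd_diff [simp]: "vhd (x - y) = vhd x - vhd y"
  and vhd_smult [simp]: "vhd (c *s x) = c * vhd x"
  and vhd_zero [simp]: "vhd 0 = 0"
  and vtl_add [simp]: "vtl (x + y) = vtl x + vtl y"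
  and vtl_diff [simp]: "vtl (x - y) = vtl x - vtl y"
  and vtl_smult [simp]: "vtl (c *s x) = c *s vtl x"
  and vtl_zero [simp]: "vtl 0 = 0"
  by (simp_all add: vhd_def vtl_def vec_eq_iff)

lemma vhd_vtl_holomorphic:
  assumes "\<And>i. (\<lambda>z. X z $ i) holomorphic_on S"
  shows "(\<lambda>z. vhd (X z)) holomorphic_on S" and "(\<lambda>z. vtl (X z) $ i) holomorphic_on S"
  by (simp_all add: vhd_def vtl_def assms)

lemma norm_vhd_le: "norm (vhd x) \<le> norm x"
  unfolding vhd_def by (rule Finite_Cartesian_Product.norm_nth_le)

lemma norm_vtl_le: "norm (vtl x) \<le> norm x"
proof -
  have "(\<Sum>j\<in>UNIV. (norm (x $ Inr j))\<^sup>2) = (\<Sum>i\<in>range Inr. (norm (x $ i))\<^sup>2)"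
    by (simp add: sum.reindex)
  also have "\<dots> \<le> (\<Sum>i\<in>UNIV. (norm (x $ i))\<^sup>2)"
    by (rule sum_mono2) auto
  finally show ?thesis
    unfolding vtl_def norm_vec_def L2_set_def by simp
qed

definition upart :: "'a^('n::finite + 'r::finite) \<Rightarrow> 'a^'n" where
  "upart V = (\<chi> a. V $ Inl a)"

definition vpart :: "'a^('n::finite + 'r::finite) \<Rightarrow> 'a^'r" where
  "vpart V = (\<chi> b. V $ Inr b)"

lemma upart_stack [simp]: "upart (stack x y) = x"
  and vpart_stack [simp]: "vpart (stack x y) = y"
  by (simp_all add: upart_def vpart_def stack_def vec_eq_iff)

lemma stack_upart_vpart: "stack (upart V) (vpart V) = V"
  by (simp add: vec_eq_iff stack_def upart_def vpart_def split: sum.split)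

lemma stack_add [simp]: "stack x y + stack x' y' = stack (x + x') (y + y')"
  and stack_diff [simp]: "stack x y - stack x' y' = stack (x - x') (y - y')"
  and stack_uminus [simp]: "- stack x y = stack (- x) (- y)"
  and stack_smult [simp]: "c *s stack x y = stack (c *s x) (c *s y)"
  and stack_zero [simp]: "stack 0 0 = 0"
  and stack_eq_0_iff [simp]: "stack x y = 0 \<longleftrightarrow> x = 0 \<and> y = 0"
  by (auto simp: vec_eq_iff stack_def split: sum.split)

lemma upart_add [simp]: "upart (x + y) = upart x + upart y"
  and upart_diff [simp]: "upart (x - y) = upart x - upart y"
  and upart_uminus [simp]: "upart (- x) = - upart x"
  and upart_smult [simp]: "upart (c *s x) = c *s upart x"
  and upart_zero [simp]: "upart 0 = 0"
  and vpart_add [simp]: "vpart (x + y) = vpart x + vpart y"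
  and vpart_diff [simp]: "vpart (x - y) = vpart x - vpart y"
  and vpart_uminus [simp]: "vpart (- x) = - vpart x"
  and vpart_smult [simp]: "vpart (c *s x) = c *s vpart x"
  and vpart_zero [simp]: "vpart 0 = 0"
  by (simp_all add: upart_def vpart_def vec_eq_iff)

lemma upart_sum:
  fixes x :: "'i \<Rightarrow> 'a::ring^('n::finite + 'r::finite)"
  shows "upart (\<Sum>i\<in>I. x i) = (\<Sum>i\<in>I. upart (x i))"
    and vpart_sum: "vpart (\<Sum>i\<in>I. x i) = (\<Sum>i\<in>I. vpart (x i))"
  by (induction I rule: infinite_finite_induct) simp_all

lemma sum_UNIV_Plus:
  "(\<Sum>i\<in>(UNIV::('n::finite + 'r::finite) set). g i) = (\<Sum>a\<in>UNIV. g (Inl a)) + (\<Sum>b\<in>UNIV. g (Inr b))"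
  using sum.Plus[of "UNIV::'n set" "UNIV::'r set" g] by (simp add: comp_def)

lemma blk_mult:
  fixes P11 :: "'a::comm_semiring_1^'n::finite^'n"
  shows "blk P11 P12 P21 P22 *v V = stack (P11 *v upart V + P12 *v vpart V) (P21 *v upart V + P22 *v vpart V)"
  by (simp add: vec_eq_iff blk_def stack_def upart_def vpart_def matrix_vector_mult_def sum_UNIV_Plus
      split: sum.split)

lemma rowblk_mult: "rowblk P1 P2 *v V = P1 *v upart V + P2 *v vpart V"
  by (simp add: vec_eq_iff rowblk_def upart_def vpart_def matrix_vector_mult_def sum_UNIV_Plus)

lemma embI_mult: "(embI :: 'a::comm_semiring_1^'r::finite^('n::finite + 'r)) *v s = stack 0 s"
  by (simp add: vec_eq_iff embI_def stack_def matrix_vector_mult_def if_distrib[of "\<lambda>c. c * _"]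
      split: sum.split cong: if_cong)

lemma cmat_blk: "cmat (blk P11 P12 P21 P22) = blk (cmat P11) (cmat P12) (cmat P21) (cmat P22)"
  by (simp add: vec_eq_iff cmat_def blk_def split: sum.split)

lemma cmat_zero [simp]: "cmat 0 = 0"
  by (simp add: vec_eq_iff cmat_def)

lemma cmat_mult: "cmat (A ** B) = cmat A ** cmat B"
  by (simp add: vec_eq_iff cmat_def matrix_matrix_mult_def)

lemma cmat_mat_1: "cmat (mat 1) = mat 1"
  by (simp add: vec_eq_iff cmat_def mat_def)

lemma cmat_diff: "cmat (A - B) = cmat A - cmat B"
  by (simp add: vec_eq_iff cmat_def)

lemma cmat_cvec: "cmat A *v cvec x = cvec (A *v x)"
  by (simp add: vec_eq_iff cmat_def cvec_def matrix_vector_mult_def)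

lemma cvec_smult: "cvec (r *s x) = complex_of_real r *s cvec x"
  and cvec_eq_0_iff [simp]: "cvec x = 0 \<longleftrightarrow> x = 0"
  by (auto simp: vec_eq_iff cvec_def)

lemma cvec_stack: "cvec (stack x y) = stack (cvec x) (cvec y)"
  by (simp add: vec_eq_iff cvec_def stack_def split: sum.split)

lemma upart_cvec: "upart (cvec x) = cvec (upart x)"
  and vpart_cvec: "vpart (cvec x) = cvec (vpart x)"
  by (simp_all add: vec_eq_iff cvec_def upart_def vpart_def)

lemma cmat_invertible:
  fixes A :: "real^'n^'n"
  assumes "invertible A"
  shows "invertible (cmat A)" and "matrix_inv (cmat A) = cmat (matrix_inv A)"
proof -
  have "cmat A ** cmat (matrix_inv A) = mat 1"
    by (simp add: cmat_mult[symmetric] matrix_inv_right[OF assms] cmat_mat_1)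
  then show "invertible (cmat A)" "matrix_inv (cmat A) = cmat (matrix_inv A)"
    using invertible_right_inverse matrix_inv_eqI by blast+
qed

lemma matrix_vector_mult_uminus_left: "(- M :: 'a::ring_1^'n^'m) *v x = - (M *v x)"
  by (simp add: vec_eq_iff matrix_vector_mult_def sum_negf)

lemma eigenvectors_independent:
  fixes M :: "'a::field^'m^'m" and s :: "'k \<Rightarrow> 'a^'m"
  assumes eigen: "\<And>j. M *v s j = g j *s s j" and nonzero: "\<And>j. s j \<noteq> 0" and "inj g"
  shows "finite T \<Longrightarrow> (\<Sum>j\<in>T. c j *s s j) = 0 \<Longrightarrow> \<forall>j\<in>T. c j = 0"
proof (induction T arbitrary: c rule: finite_induct)
  case (insert j T)
  have sum_0: "c j *s s j + (\<Sum>k\<in>T. c k *s s k) = 0"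
    using insert by simp
  then have "M *v (c j *s s j + (\<Sum>k\<in>T. c k *s s k)) - g j *s (c j *s s j + (\<Sum>k\<in>T. c k *s s k)) = 0"
    by simp
  then have "(\<Sum>k\<in>T. (c k * (g k - g j)) *s s k) = 0"
    by (simp add: vec.sum vec.scale eigen vec.scale_sum_right sum_subtractf[symmetric] algebra_simps)
  then have "\<forall>k\<in>T. c k * (g k - g j) = 0"
    by (rule insert.IH)
  moreover have "g k \<noteq> g j" if "k \<in> T" for k
    using \<open>inj g\<close> insert.hyps(2) that by (metis injD)
  ultimately have "\<forall>k\<in>T. c k = 0"
    by simp
  moreover have "c j = 0"
    using sum_0 nonzero[of j] calculation by simp
  ultimately show ?case
    by simp
qed simp

lemma independent_vectors_span:
  fixes s :: "'r \<Rightarrow> 'a::field^'r"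
  assumes independent: "\<And>c. (\<Sum>j\<in>UNIV. c j *s s j) = 0 \<Longrightarrow> \<forall>j. c j = 0"
  shows "\<exists>y. x = (\<Sum>k\<in>UNIV. y k *s s k)"
proof -
  define S :: "'a^'r^'r" where "S = (\<chi> i k. s k $ i)"
  have column: "column k S = s k" for k
    by (simp add: S_def column_def vec_eq_iff)
  have "\<exists>B. B ** S = mat 1"
    unfolding matrix_left_invertible_independent_columns column using independent by blast
  then have "invertible S"
    using invertible_left_inverse by blast
  then have "x = S *v (matrix_inv S *v x)"
    by (simp add: matrix_inv_cancel)
  also have "\<dots> = (\<Sum>k\<in>UNIV. (matrix_inv S *v x) $ k *s s k)"
    by (simp add: matrix_mult_sum column)
  finally show ?thesis
    by blast
qed

lemma eigenbasis_simple_eigenvalue: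
  fixes M :: "'a::field^'r^'r" and s :: "'r \<Rightarrow> 'a^'r"
  assumes "inj g" and nonzero: "\<And>k. s k \<noteq> 0" and eigen: "\<And>k. M *v s k = g k *s s k"
    and generalized: "M *v x - g j *s x = m *s s j"
  shows "m = 0" and "\<exists>t. x = t *s s j"
proof -
  have independent: "\<forall>k. c k = 0" if "(\<Sum>k\<in>UNIV. c k *s s k) = 0" for c
    using eigenvectors_independent[OF eigen nonzero \<open>inj g\<close>, of UNIV c] that by simp
  obtain y where x: "x = (\<Sum>k\<in>UNIV. y k *s s k)"
    using independent_vectors_span[OF independent] by blast
  have Mx: "M *v x = (\<Sum>k\<in>UNIV. (y k * g k) *s s k)"
    unfolding x by (simp add: vec.sum vec.scale eigen)
  have gx: "g j *s x = (\<Sum>k\<in>UNIV. (g j * y k) *s s k)"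
    unfolding x by (simp add: vec.scale_sum_right)
  have "(\<Sum>k\<in>UNIV. (if k = j then m else 0) *s s k) = (\<Sum>k\<in>UNIV. if k = j then m *s s k else 0)"
    by (rule sum.cong) auto
  then have ms: "m *s s j = (\<Sum>k\<in>UNIV. (if k = j then m else 0) *s s k)"
    by simp
  define d where "d k = y k * (g k - g j) - (if k = j then m else 0)" for k
  have "(\<Sum>k\<in>UNIV. d k *s s k)
      = (\<Sum>k\<in>UNIV. (y k * g k) *s s k - (g j * y k) *s s k - (if k = j then m else 0) *s s k)"
    by (rule sum.cong) (simp_all add: d_def algebra_simps)
  also have "\<dots> = M *v x - g j *s x - m *s s j"
    by (simp only: sum_subtractf Mx gx ms)
  finally have d_0: "\<forall>k. d k = 0"
    using generalized by (intro independent) simp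
  then show "m = 0"
    by (auto simp: d_def dest: spec[of _ j])
  have y: "y k = 0" if "k \<noteq> j" for k
  proof -
    have "y k * (g k - g j) = 0"
      using d_0 that by (simp add: d_def)
    moreover have "g k \<noteq> g j"
      using \<open>inj g\<close> that by (auto dest: injD)
    ultimately show ?thesis
      by simp
  qed
  have "x = (\<Sum>k\<in>UNIV. if k = j then y j *s s j else 0)"
    unfolding x by (rule sum.cong) (auto simp: y)
  then show "\<exists>t. x = t *s s j"
    by auto
qed

lemma bigo_at_0_if_ball_bound:
  fixes f g :: "complex \<Rightarrow> 'a::real_normed_field"
  assumes "0 < e" and "\<forall>z\<in>ball 0 e. norm (f z) \<le> C * norm (g z)"
  shows "f \<in> O[at 0](g)"
proof (rule bigoI)
  show "\<forall>\<^sub>F z in at 0. norm (f z) \<le> C * norm (g z)"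
    using eventually_at_ball[OF assms(1), of 0 UNIV] assms(2) by (auto elim: eventually_mono)
qed

lemma vcons_branch_expansion:
  fixes X :: "complex \<Rightarrow> complex^(unit + 'b::finite)"
  assumes "0 < e" and bound: "\<forall>z\<in>ball 0 e. norm (X z - vcons h W) \<le> C * norm z"
  shows "X 0 = vcons h W"
    and "(\<lambda>z. vhd (X z) - h) \<in> O[at 0](\<lambda>z. z)"
    and "(\<lambda>z. norm (vtl (X z) - W)) \<in> O[at 0](\<lambda>z. norm z)"
proof -
  have "norm (X 0 - vcons h W) \<le> C * norm (0::complex)"
    using bound \<open>0 < e\<close> by (metis centre_in_ball)
  then show "X 0 = vcons h W"
    by simp
  have "norm (vhd (X z) - h) \<le> C * norm z" "norm (vtl (X z) - W) \<le> C * norm z" if "z \<in> ball 0 e" for z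
    using norm_vhd_le[of "X z - vcons h W"] norm_vtl_le[of "X z - vcons h W"] bound that by force+
  then show "(\<lambda>z. vhd (X z) - h) \<in> O[at 0](\<lambda>z. z)" "(\<lambda>z. norm (vtl (X z) - W)) \<in> O[at 0](\<lambda>z. norm z)"
    by (intro bigo_at_0_if_ball_bound[OF \<open>0 < e\<close>, where C=C] ballI; simp)+
qed

lemma invertible_near:
  fixes P :: "complex \<Rightarrow> complex^'n^'n"
  assumes "\<And>i j. isCont (\<lambda>z. P z $ i $ j) w" and "invertible (P w)"
  obtains e where "0 < e" and "\<And>z. z \<in> ball w e \<Longrightarrow> invertible (P z)"
proof -
  have "isCont (\<lambda>z. det (P z)) w"
    unfolding det_def by (intro continuous_intros assms(1))
  moreover have "det (P w) \<noteq> 0"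
    using assms(2) invertible_det_nz by blast
  ultimately obtain e where "0 < e" and "\<And>z. dist w z < e \<Longrightarrow> det (P z) \<noteq> 0"
    using continuous_at_avoid by blast
  then show ?thesis
    using that invertible_det_nz by (metis mem_ball)
qed

definition sum_swap :: "'a + 'b \<Rightarrow> 'b + 'a" where
  "sum_swap = case_sum Inr Inl"

lemma sum_swap_simps [simp]: "sum_swap (Inl a) = Inr a" "sum_swap (Inr b) = Inl b"
  by (simp_all add: sum_swap_def)

lemma bij_sum_swap: "bij sum_swap"
  by (rule o_bij[of sum_swap]) (auto simp: fun_eq_iff sum_swap_def split: sum.split)

lemma finite_uniform_radius:
  fixes R :: "'k::finite \<Rightarrow> real \<Rightarrow> 'x \<Rightarrow> bool"
  assumes "\<And>k. \<exists>e X. 0 < e \<and> R k e X"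
    and shrink: "\<And>k e e' X. R k e X \<Longrightarrow> e' \<le> e \<Longrightarrow> R k e' X"
  obtains e X where "0 < e" and "\<And>k. R k e (X k)"
proof -
  obtain ef Xf where f: "\<And>k. 0 < ef k \<and> R k (ef k) (Xf k)"
    using assms(1) by metis
  define e where "e = Min (range ef)"
  have "0 < e"
    using f by (simp add: e_def)
  moreover have "R k e (Xf k)" for k
    using shrink[of k "ef k" "Xf k" e] f by (simp add: e_def)
  ultimately show ?thesis
    using that by blast
qed

section \<open>The relaxation system and its slow modes\<close>

locale relaxation_system =
  fixes fu :: "real^'n::finite^'n" and fv :: "real^'r::finite^'n"
    and gu :: "real^'n^'r" and gv :: "real^'r^'r"
    and qu :: "real^'n^'r" and qv :: "real^'r^'r"
    and a :: "'n \<Rightarrow> real" and rs :: "'n \<Rightarrow> real^'n" and ls :: "'n \<Rightarrow> real^'n"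
  assumes A_nonsingular: "0 \<notin> eigvals (cmat (blk fu fv gu gv))"
    and qv_stable: "\<forall>\<sigma>\<in>eigvals (cmat qv). Re \<sigma> < 0"
    and a_inj: "inj a"
    and a_nonzero: "\<forall>j. a j \<noteq> 0"
    and rs_eigen: "\<forall>j. dfstar fu fv qu qv *v rs j = a j *s rs j"
    and ls_eigen: "\<forall>j. ls j v* dfstar fu fv qu qv = a j *s ls j"
    and ls_rs: "\<forall>j k. ls j \<bullet> rs k = (if j = k then 1 else 0)"
    and fast_eigvals_card:
      "card (eigvals (rowblk (cmat qu) (cmat qv) ** matrix_inv (cmat (blk fu fv gu gv)) ** embI)) = CARD('r)"
begin

abbreviation "Ac \<equiv> cmat (blk fu fv gu gv)"
abbreviation "Qc \<equiv> cmat (blk 0 0 qu qv)"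
abbreviation "fast_matrix \<equiv> rowblk (cmat qu) (cmat qv) ** matrix_inv Ac ** embI"
abbreviation "dFc \<equiv> cmat (dfstar fu fv qu qv)"
abbreviation "qvi \<equiv> matrix_inv qv"

lemma Ac_invertible: "invertible Ac"
proof (rule invertible_if_kernel_trivial)
  fix x
  assume "Ac *v x = 0"
  then have "Ac *v x = 0 *s x"
    by simp
  then show "x = 0"
    using A_nonsingular unfolding eigvals_def by blast
qed

lemma qv_invertible: "invertible qv"
proof (rule invertible_if_kernel_trivial)
  fix x
  assume "qv *v x = 0"
  then have "cmat qv *v cvec x = 0 *s cvec x"
    by (simp add: cmat_cvec)
  moreover have "0 \<notin> eigvals (cmat qv)"
    using qv_stable by fastforce
  ultimately have "cvec x = 0"
    unfolding eigvals_def by blast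
  then show "x = 0"
    by simp
qed

lemma cmat_qv_cancel: "cmat qv *v (cmat qvi *v x) = x" "cmat qvi *v (cmat qv *v x) = x"
  using matrix_inv_cancel[OF cmat_invertible(1)[OF qv_invertible]]
  by (simp_all add: cmat_invertible(2)[OF qv_invertible])

lemma Ac_mult: "Ac *v V = stack (cmat fu *v upart V + cmat fv *v vpart V) (cmat gu *v upart V + cmat gv *v vpart V)"
  by (simp add: cmat_blk blk_mult)

lemma Qc_mult: "Qc *v V = stack 0 (cmat qu *v upart V + cmat qv *v vpart V)"
  by (simp add: cmat_blk blk_mult)

lemma fast_matrix_mult: "fast_matrix *v s = vpart (Qc *v (matrix_inv Ac *v stack 0 s))"
  by (simp add: matrix_vector_mul_assoc[symmetric] embI_mult rowblk_mult Qc_mult)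

lemma dFc_eq: "dFc = cmat fu - cmat fv ** cmat qvi ** cmat qu"
  by (simp add: dfstar_def cmat_diff cmat_mult)

lemma qv_solve: "cmat qu *v u + cmat qv *v v = h \<Longrightarrow> v = cmat qvi *v (h - cmat qu *v u)"
  by (metis add_diff_cancel_left' cmat_qv_cancel(2))

lemma dFc_combination:
  "cmat fu *v u + cmat fv *v (cmat qvi *v (h - cmat qu *v u)) = dFc *v u + cmat fv *v (cmat qvi *v h)"
  unfolding dFc_eq
  by (simp add: vec.diff matrix_vector_mul_assoc matrix_mul_assoc algebra_simps)

definition Lmat :: "real^'n^'n" where
  "Lmat = (\<chi> j i. ls j $ i)"

lemma Lmat_cvec: "(cmat Lmat *v cvec x) $ k = complex_of_real (ls k \<bullet> x)"
  by (simp add: Lmat_def cmat_def cvec_def matrix_vector_mult_def inner_vec_def)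

lemma Lmat_rs: "(cmat Lmat *v cvec (rs j)) $ k = (if k = j then 1 else 0)"
  using ls_rs by (simp add: Lmat_cvec)

lemma Lmat_dFc: "(cmat Lmat *v (dFc *v x)) $ k = complex_of_real (a k) * (cmat Lmat *v x) $ k"
proof -
  have "Lmat ** dfstar fu fv qu qv = (\<chi> k i. a k * Lmat $ k $ i)"
    using ls_eigen
    by (simp add: vec_eq_iff Lmat_def matrix_matrix_mult_def vector_matrix_mult_def)
  then have "cmat Lmat *v (dFc *v x) = cmat (\<chi> k i. a k * Lmat $ k $ i) *v x"
    by (simp add: matrix_vector_mul_assoc cmat_mult[symmetric])
  then show ?thesis
    by (simp add: cmat_def matrix_vector_mult_def sum_distrib_left mult.assoc)
qed

lemma Lmat_injective:
  assumes "\<And>k. (cmat Lmat *v x) $ k = 0"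
  shows "x = 0"
proof -
  define Rmat :: "real^'n^'n" where "Rmat = (\<chi> i k. rs k $ i)"
  have "Lmat ** Rmat = mat 1"
    using ls_rs by (simp add: vec_eq_iff Lmat_def Rmat_def matrix_matrix_mult_def mat_def inner_vec_def)
  then have "cmat Rmat ** cmat Lmat = mat 1"
    by (simp add: cmat_mult[symmetric] matrix_left_right_inverse cmat_mat_1)
  then have "x = cmat Rmat *v (cmat Lmat *v x)"
    by (simp add: matrix_vector_mul_assoc)
  also have "cmat Lmat *v x = 0"
    using assms by (simp add: vec_eq_iff)
  finally show ?thesis
    by simp
qed

lemma dFc_injective: "dFc *v x = 0 \<Longrightarrow> x = 0"
  using Lmat_dFc[of x] a_nonzero by (intro Lmat_injective) simp

lemma fast_matrix_injective: "fast_matrix *v s = 0 \<Longrightarrow> s = 0"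
proof -
  assume "fast_matrix *v s = 0"
  define W where "W = matrix_inv Ac *v stack 0 s"
  have AW: "Ac *v W = stack 0 s"
    unfolding W_def by (rule matrix_inv_cancel(1)[OF Ac_invertible])
  have "cmat qu *v upart W + cmat qv *v vpart W = 0"
    using \<open>fast_matrix *v s = 0\<close> by (simp add: fast_matrix_mult Qc_mult W_def)
  then have v: "vpart W = cmat qvi *v (0 - cmat qu *v upart W)"
    by (rule qv_solve)
  have "cmat fu *v upart W + cmat fv *v vpart W = 0"
    using arg_cong[OF AW, of upart] by (simp add: Ac_mult)
  then have "dFc *v upart W = 0"
    using dFc_combination[of "upart W" 0] unfolding v by simp
  then have "upart W = 0"
    by (rule dFc_injective)
  moreover have "vpart W = 0"
    using v \<open>upart W = 0\<close> by simp
  ultimately have "W = 0"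
    using stack_upart_vpart[of W] by simp
  then show "s = 0"
    using AW by simp
qed

lemma fast_eigendata:
  obtains \<gamma> :: "'r \<Rightarrow> complex" and s :: "'r \<Rightarrow> complex^'r"
  where "inj \<gamma>" and "\<And>j. \<gamma> j \<noteq> 0" and "\<And>j. s j \<noteq> 0" and "\<And>j. fast_matrix *v s j = \<gamma> j *s s j"
proof -
  have "finite (eigvals fast_matrix)"
    using fast_eigvals_card card.infinite by fastforce
  then obtain \<gamma> where \<gamma>: "bij_betw \<gamma> (UNIV::'r set) (eigvals fast_matrix)"
    using finite_same_card_bij[OF finite \<open>finite (eigvals fast_matrix)\<close>] fast_eigvals_card by auto
  then have "\<forall>j. \<exists>v. v \<noteq> 0 \<and> fast_matrix *v v = \<gamma> j *s v"
    unfolding bij_betw_def eigvals_def by blast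
  then obtain s where s: "\<And>j. s j \<noteq> 0" "\<And>j. fast_matrix *v s j = \<gamma> j *s s j"
    by metis
  have "\<gamma> j \<noteq> 0" for j
    using s fast_matrix_injective[of "s j"] by auto
  then show ?thesis
    using that \<gamma> s unfolding bij_betw_def by blast
qed

definition Rstar :: "'n \<Rightarrow> complex^('n + 'r)" where
  "Rstar j = cvec (stack (rs j) (- (qvi ** qu) *v rs j))"

lemma upart_Rstar: "upart (Rstar j) = cvec (rs j)"
  by (simp add: Rstar_def cvec_stack)

lemma Qc_Rstar: "Qc *v Rstar j = 0"
proof -
  have "qv *v ((qvi ** qu) *v rs j) = qu *v rs j"
    by (simp add: matrix_vector_mul_assoc matrix_mul_assoc matrix_inv_right[OF qv_invertible])
  then have "qu *v rs j + qv *v (- (qvi ** qu) *v rs j) = 0"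
    by (simp add: matrix_vector_mult_uminus_left vec.neg)
  then show ?thesis
    by (simp add: Rstar_def cmat_cvec blk_mult)
qed

lemma upart_Ac_Rstar: "upart (Ac *v Rstar j) = complex_of_real (a j) *s cvec (rs j)"
proof -
  have "fu *v rs j + fv *v (- (qvi ** qu) *v rs j) = dfstar fu fv qu qv *v rs j"
    by (simp add: dfstar_def matrix_vector_mult_uminus_left vec.neg matrix_vector_mul_assoc
        matrix_mul_assoc matrix_vector_mult_diff_rdistrib)
  then have "upart (blk fu fv gu gv *v stack (rs j) (- (qvi ** qu) *v rs j)) = a j *s rs j"
    using rs_eigen by (simp add: blk_mult)
  then show ?thesis
    by (simp add: Rstar_def cmat_cvec upart_cvec cvec_smult)
qed

lemma Bstar_rs:
  fixes j :: 'n
  defines "v0 \<equiv> - (qvi ** qu) *v rs j"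
  defines "h \<equiv> (- 1 / a j) *s (gu *v rs j + gv *v v0) + v0"
  shows "Bstar fu fv gu gv qu qv *v rs j = a j *s (fv *v (qvi *v h))"
proof -
  have "a j \<noteq> 0"
    using a_nonzero by blast
  have qvi_qu: "qvi *v (qu *v rs j) = - v0"
    by (simp add: v0_def matrix_vector_mult_uminus_left matrix_vector_mul_assoc)
  have "Bstar fu fv gu gv qu qv *v rs j
      = - (fv *v (qvi *v (gu *v rs j - gv *v (qvi *v (qu *v rs j))
          + qvi *v (qu *v (dfstar fu fv qu qv *v rs j)))))"
    unfolding Bstar_def
    by (simp add: matrix_vector_mult_uminus_left matrix_vector_mul_assoc[symmetric]
        matrix_vector_mult_add_rdistrib matrix_vector_mult_diff_rdistrib)
  also have "\<dots> = - (fv *v (qvi *v (gu *v rs j + gv *v v0 - a j *s v0)))"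
    using rs_eigen by (simp add: qvi_qu vec.scale vec.neg)
  also have "gu *v rs j + gv *v v0 - a j *s v0 = (- a j) *s h"
    unfolding h_def using \<open>a j \<noteq> 0\<close> by (simp add: vec_eq_iff field_simps)
  finally show ?thesis
    by (simp add: vec.scale vec.neg)
qed

lemma dFc_simple_eigenvalue:
  assumes linearized: "(- 1 / complex_of_real (a j)) *s (dFc *v u) + m *s cvec (rs j) + u = 0"
    and normalized: "(cmat Lmat *v u) $ j = 0"
  shows "m = 0 \<and> u = 0"
proof -
  have a_j: "complex_of_real (a j) \<noteq> 0"
    using a_nonzero by simp
  have component: "- 1 / complex_of_real (a j) * (complex_of_real (a k) * (cmat Lmat *v u) $ k)
      + m * (if k = j then 1 else 0) + (cmat Lmat *v u) $ k = 0" for k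
    using arg_cong[OF linearized, of "\<lambda>x. (cmat Lmat *v x) $ k"]
    by (simp only: vec.add vec.scale vector_add_component vector_smult_component Lmat_dFc Lmat_rs
        vec.zero zero_index)
  then have "m = 0"
    using component[of j] normalized by simp

  moreover have "(cmat Lmat *v u) $ k = 0" for k
  proof (cases "k = j")
    case False
    then have "a k \<noteq> a j"
      using a_inj by (auto dest: injD)
    then have "1 - complex_of_real (a k) / complex_of_real (a j) \<noteq> 0"
      using a_j by (simp add: field_simps)
    moreover have "(1 - complex_of_real (a k) / complex_of_real (a j)) * (cmat Lmat *v u) $ k = 0"
      using component[of k] False by (simp add: field_simps)
    ultimately show ?thesis
      by (meson mult_eq_0_iff)
  qed (use normalized in simp)
  ultimately show ?thesis
    using Lmat_injective by blast
qed

lemma slow_speed_correction: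
  assumes first: "\<nu>0 *s upart (Ac *v V) + m *s upart (Ac *v Rstar j) + upart V = 0"
    and second: "vpart (Qc *v V) = \<nu>0 *s vpart (Ac *v Rstar j) + vpart (Rstar j)"
    and \<nu>0: "\<nu>0 = - 1 / complex_of_real (a j)"
  shows "m = complex_of_real (ls j \<bullet> (Bstar fu fv gu gv qu qv *v rs j)) / complex_of_real (a j) ^ 3"
proof -
  have a_j: "complex_of_real (a j) \<noteq> 0"
    using a_nonzero by simp
  define v0 where "v0 = - (qvi ** qu) *v rs j"
  define h where "h = (- 1 / a j) *s (gu *v rs j + gv *v v0) + v0"
  have "vpart (Ac *v Rstar j) = cvec (gu *v rs j + gv *v v0)" "vpart (Rstar j) = cvec v0"
    by (simp_all add: Rstar_def v0_def cmat_cvec blk_mult vpart_cvec)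
  then have "\<nu>0 *s vpart (Ac *v Rstar j) + vpart (Rstar j) = cvec h"
    by (simp add: h_def \<nu>0 vec_eq_iff cvec_def add_divide_distrib)
  then have "cmat qu *v upart V + cmat qv *v vpart V = cvec h"
    using second by (simp add: Qc_mult)
  then have "vpart V = cmat qvi *v (cvec h - cmat qu *v upart V)"
    by (rule qv_solve)
  then have "upart (Ac *v V) = dFc *v upart V + cmat fv *v (cmat qvi *v cvec h)"
    by (simp add: Ac_mult dFc_combination)
  then have "\<nu>0 *s (dFc *v upart V + cmat fv *v (cmat qvi *v cvec h))
      + (m * complex_of_real (a j)) *s cvec (rs j) + upart V = 0"
    using first by (simp add: upart_Ac_Rstar)
  from arg_cong[OF this, of "\<lambda>x. (cmat Lmat *v x) $ j"]
  have "\<nu>0 * (complex_of_real (a j) * (cmat Lmat *v upart V) $ j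
      + (cmat Lmat *v (cmat fv *v (cmat qvi *v cvec h))) $ j)
      + m * complex_of_real (a j) + (cmat Lmat *v upart V) $ j = 0"
    by (simp only: vec.add vec.scale vector_add_component vector_smult_component Lmat_dFc Lmat_rs
        if_P[OF refl] mult_1_right vec.zero zero_index)
  moreover have "\<nu>0 * complex_of_real (a j) = -1"
    using a_j by (simp add: \<nu>0)
  moreover have "cmat fv *v (cmat qvi *v cvec h) = cvec (fv *v (qvi *v h))"
    by (simp add: cmat_cvec)
  ultimately have "m * complex_of_real (a j) = - \<nu>0 * complex_of_real (ls j \<bullet> (fv *v (qvi *v h)))"
    by (simp add: distrib_left mult.assoc[symmetric] Lmat_cvec eq_neg_iff_add_eq_0 add.commute)
  then have "m = complex_of_real (ls j \<bullet> (fv *v (qvi *v h))) / complex_of_real (a j) ^ 2"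
    using a_j by (simp add: \<nu>0 field_simps power2_eq_square)
  moreover have "ls j \<bullet> (Bstar fu fv gu gv qu qv *v rs j) = a j * (ls j \<bullet> (fv *v (qvi *v h)))"
    unfolding Bstar_rs h_def v0_def by (simp add: scalar_mult_eq_scaleR)
  ultimately show ?thesis
    using a_j by (simp add: power3_eq_cube power2_eq_square mult.assoc)
qed

lemma slow_linearization_injective:
  assumes first: "(- 1 / complex_of_real (a j)) *s upart (Ac *v V) + m *s upart (Ac *v Rstar j) + upart V = 0"
    and second: "vpart (Qc *v V) = 0" and normalized: "(cmat Lmat *v upart V) $ j = 0"
  shows "m = 0 \<and> V = 0"
proof -
  have "cmat qu *v upart V + cmat qv *v vpart V = 0"
    using second by (simp add: Qc_mult)
  then have v: "vpart V = cmat qvi *v (0 - cmat qu *v upart V)"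
    by (rule qv_solve)
  then have "upart (Ac *v V) = dFc *v upart V"
    using dFc_combination[of "upart V" 0] by (simp add: Ac_mult)
  then have "(- 1 / complex_of_real (a j)) *s (dFc *v upart V)
      + (m * complex_of_real (a j)) *s cvec (rs j) + upart V = 0"
    using first by (simp add: upart_Ac_Rstar)
  from dFc_simple_eigenvalue[OF this normalized] a_nonzero have "m = 0" and "upart V = 0"
    by auto
  moreover have "vpart V = 0"
    using v \<open>upart V = 0\<close> by simp
  ultimately show ?thesis
    using stack_upart_vpart[of V] by simp
qed

lemma pencil_from_blocks:
  assumes "\<nu> *s upart (Ac *v V) + upart V = 0"
    and "vpart (Qc *v V) - z *s vpart V - (z * \<nu>) *s vpart (Ac *v V) = 0"
  shows "Qc *v V - z *s V - (z * \<nu>) *s (Ac *v V) = 0"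
proof -
  have "upart (Qc *v V - z *s V - (z * \<nu>) *s (Ac *v V)) = - z *s (\<nu> *s upart (Ac *v V) + upart V)"
    by (simp add: Qc_mult vec_eq_iff algebra_simps)
  then show ?thesis
    using assms stack_upart_vpart[of "Qc *v V - z *s V - (z * \<nu>) *s (Ac *v V)"] by simp
qed

lemma slow_mode:
  fixes j :: 'n
  defines "\<nu>0 \<equiv> - 1 / complex_of_real (a j)"
    and "\<nu>1 \<equiv> complex_of_real (ls j \<bullet> (Bstar fu fv gu gv qu qv *v rs j)) / complex_of_real (a j) ^ 3"
  obtains e X C where "e > 0" and "\<And>i. (\<lambda>z. X z $ i) holomorphic_on ball 0 e"
    and "\<And>z. z \<in> ball 0 e \<Longrightarrow>
      Qc *v vtl (X z) - z *s vtl (X z) - (z * vhd (X z)) *s (Ac *v vtl (X z)) = 0"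
    and "\<And>z. z \<in> ball 0 e \<Longrightarrow> norm (X z - vcons \<nu>0 (Rstar j)) \<le> C * norm z"
    and "\<And>z. z \<in> ball 0 e \<Longrightarrow> norm (vhd (X z) - \<nu>0 - z * \<nu>1) \<le> C * (norm z)^2"
proof -
  txt \<open>The unknown is \<open>vcons \<nu> V\<close> with \<open>\<mu> = z \<nu>\<close>: the \<open>u\<close>-rows of the pencil are divided by \<open>z\<close>,
    and the first equation normalises \<open>l\<^sub>j \<bullet> u = 1\<close>.\<close>
  define B0 :: "complex^(unit + ('n + 'r)) \<Rightarrow> complex^(unit + ('n + 'r)) \<Rightarrow> complex^(unit + ('n + 'r))"
    where "B0 x x' = vcons 0 (stack (vhd x *s upart (Ac *v vtl x')) 0)" for x x'
  define L0 :: "complex^(unit + ('n + 'r)) \<Rightarrow> complex^(unit + ('n + 'r))"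
    where "L0 x = vcons ((cmat Lmat *v upart (vtl x)) $ j) (stack (upart (vtl x)) (vpart (Qc *v vtl x)))" for x
  define B1 :: "complex^(unit + ('n + 'r)) \<Rightarrow> complex^(unit + ('n + 'r)) \<Rightarrow> complex^(unit + ('n + 'r))"
    where "B1 x x' = vcons 0 (stack 0 (- (vhd x *s vpart (Ac *v vtl x'))))" for x x'
  define L1 :: "complex^(unit + ('n + 'r)) \<Rightarrow> complex^(unit + ('n + 'r))"
    where "L1 x = vcons 0 (stack 0 (- vpart (vtl x)))" for x
  have linear: "vec_bilinear B0" "vec_bilinear B1" "vec_linear L0" "vec_linear L1"
    by (intro vec_bilinearI vec_linearI;
        simp add: B0_def B1_def L0_def L1_def vec.add vec.scale algebra_simps)+
  have root: "B0 (vcons \<nu>0 (Rstar j)) (vcons \<nu>0 (Rstar j)) + L0 (vcons \<nu>0 (Rstar j)) + vcons (-1) 0 = 0"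
    using a_nonzero
    by (simp add: B0_def L0_def \<nu>0_def upart_Rstar upart_Ac_Rstar Lmat_rs Qc_Rstar vec_eq_iff)
  have nondegenerate: "y = 0"
    if "B0 (vcons \<nu>0 (Rstar j)) y + B0 y (vcons \<nu>0 (Rstar j)) + L0 y = 0" for y
  proof -
    have "\<nu>0 *s upart (Ac *v vtl y) + vhd y *s upart (Ac *v Rstar j) + upart (vtl y) = 0"
      and "vpart (Qc *v vtl y) = 0" and "(cmat Lmat *v upart (vtl y)) $ j = 0"
      using arg_cong[OF that, of vhd] arg_cong[OF that, of "\<lambda>x. upart (vtl x)"]
        arg_cong[OF that, of "\<lambda>x. vpart (vtl x)"]
      by (simp_all add: B0_def L0_def algebra_simps)
    from slow_linearization_injective[OF this[unfolded \<nu>0_def]] show "y = 0"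
      using vcons_vhd_vtl[of y] by (metis vcons_zero)
  qed
  obtain e X c C where "e > 0" and X_holomorphic: "\<And>i. (\<lambda>z. X z $ i) holomorphic_on ball 0 e"
    and X_solves: "\<And>z. z \<in> ball 0 e \<Longrightarrow>
      B0 (X z) (X z) + L0 (X z) + vcons (-1) 0 + z *s (B1 (X z) (X z) + L1 (X z)) = 0"
    and c: "B0 (vcons \<nu>0 (Rstar j)) c + B0 c (vcons \<nu>0 (Rstar j)) + L0 c
      + (B1 (vcons \<nu>0 (Rstar j)) (vcons \<nu>0 (Rstar j)) + L1 (vcons \<nu>0 (Rstar j))) = 0"
    and X_quadratic: "\<And>z. z \<in> ball 0 e \<Longrightarrow>
      norm (X z - vcons \<nu>0 (Rstar j) - z *s c) \<le> C * (norm z)^2"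
    using quadratic_system_holomorphic_solution[OF linear root nondegenerate] by blast
  have "vhd c = \<nu>1"
    unfolding \<nu>1_def
  proof (rule slow_speed_correction)
    show "\<nu>0 *s upart (Ac *v vtl c) + vhd c *s upart (Ac *v Rstar j) + upart (vtl c) = 0"
      and "vpart (Qc *v vtl c) = \<nu>0 *s vpart (Ac *v Rstar j) + vpart (Rstar j)"
      using arg_cong[OF c, of "\<lambda>x. upart (vtl x)"] arg_cong[OF c, of "\<lambda>x. vpart (vtl x)"]
      by (simp_all add: B0_def L0_def B1_def L1_def algebra_simps)
  qed (simp add: \<nu>0_def)
  show ?thesis
  proof (rule that[OF \<open>e > 0\<close> X_holomorphic])
    fix z :: complex
    assume z: "z \<in> ball 0 e"
    show "Qc *v vtl (X z) - z *s vtl (X z) - (z * vhd (X z)) *s (Ac *v vtl (X z)) = 0"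
      using arg_cong[OF X_solves[OF z], of "\<lambda>x. upart (vtl x)"]
        arg_cong[OF X_solves[OF z], of "\<lambda>x. vpart (vtl x)"]
      by (intro pencil_from_blocks) (simp_all add: B0_def L0_def B1_def L1_def algebra_simps)
    have "norm (vhd (X z) - \<nu>0 - z * \<nu>1) \<le> norm (X z - vcons \<nu>0 (Rstar j) - z *s c)"
      using norm_vhd_le[of "X z - vcons \<nu>0 (Rstar j) - z *s c"] \<open>vhd c = \<nu>1\<close> by simp
    then show "norm (vhd (X z) - \<nu>0 - z * \<nu>1) \<le> max (max C 0 * e + norm c) C * (norm z)^2"
      using X_quadratic[OF z] by (smt (verit) max.cobounded2 mult_right_mono zero_le_power2)
    show "norm (X z - vcons \<nu>0 (Rstar j)) \<le> max (max C 0 * e + norm c) C * norm z"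
      using quadratic_bound_imp_linear_bound[OF X_quadratic[OF z]] z
      by (smt (verit) max.cobounded1 mem_ball_0 mult_right_mono norm_ge_zero)
  qed
qed

end

section \<open>Fast modes and the fundamental system\<close>

locale fast_eigenbasis = relaxation_system fu fv gu gv qu qv a rs ls
  for fu :: "real^'n::finite^'n" and fv :: "real^'r::finite^'n"
    and gu :: "real^'n^'r" and gv :: "real^'r^'r"
    and qu :: "real^'n^'r" and qv :: "real^'r^'r"
    and a :: "'n \<Rightarrow> real" and rs :: "'n \<Rightarrow> real^'n" and ls :: "'n \<Rightarrow> real^'n" +
  fixes \<gamma> :: "'r \<Rightarrow> complex" and s :: "'r \<Rightarrow> complex^'r"
  assumes \<gamma>_inj: "inj \<gamma>" and \<gamma>_nonzero: "\<And>k. \<gamma> k \<noteq> 0"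
    and s_nonzero: "\<And>k. s k \<noteq> 0"
    and s_eigen: "\<And>k. rowblk (cmat qu) (cmat qv) ** matrix_inv (cmat (blk fu fv gu gv)) ** embI *v s k = \<gamma> k *s s k"
begin

lemma fast_eigenvalue_simple:
  assumes generalized: "Qc *v W - \<gamma> j *s (Ac *v W) = m *s stack 0 (s j)"
  shows "m = 0" and "\<exists>t. W = t *s (matrix_inv Ac *v stack 0 (s j))"
proof -
  define x where "x = vpart (Ac *v W)"
  have "\<gamma> j *s upart (Ac *v W) = 0"
    using arg_cong[OF generalized, of upart] by (simp add: Qc_mult)
  then have "Ac *v W = stack 0 x"
    using \<gamma>_nonzero[of j] stack_upart_vpart[of "Ac *v W"] by (simp add: x_def)
  then have W: "W = matrix_inv Ac *v stack 0 x"
    by (metis matrix_inv_cancel(2)[OF Ac_invertible])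
  have "fast_matrix *v x - \<gamma> j *s x = m *s s j"
    using arg_cong[OF generalized, of vpart] \<open>Ac *v W = stack 0 x\<close>
    by (simp add: fast_matrix_mult W[symmetric])
  from eigenbasis_simple_eigenvalue[OF \<gamma>_inj s_nonzero s_eigen this]
  show "m = 0" and "\<exists>t. W = t *s (matrix_inv Ac *v stack 0 (s j))"
    by (auto simp: W vec.scale[symmetric])
qed

lemma fast_linearization_injective:
  assumes V0: "V0 = matrix_inv Ac *v stack 0 (s j)" and "V0 $ i0 \<noteq> 0"
    and linearized: "Qc *v V - \<gamma> j *s (Ac *v V) - m *s (Ac *v V0) = 0" and "V $ i0 = 0"
  shows "m = 0 \<and> V = 0"
proof -
  have "Qc *v V - \<gamma> j *s (Ac *v V) = m *s stack 0 (s j)"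
    using linearized by (simp add: V0 matrix_inv_cancel(1)[OF Ac_invertible])
  from fast_eigenvalue_simple[OF this]
  obtain t where "m = 0" and "V = t *s V0"
    by (auto simp: V0)
  with \<open>V $ i0 = 0\<close> \<open>V0 $ i0 \<noteq> 0\<close> show ?thesis
    by simp
qed

lemma fast_mode:
  obtains e X C where "e > 0" and "\<And>i. (\<lambda>z. X z $ i) holomorphic_on ball 0 e"
    and "\<And>z. z \<in> ball 0 e \<Longrightarrow> Qc *v vtl (X z) - z *s vtl (X z) - vhd (X z) *s (Ac *v vtl (X z)) = 0"
    and "\<And>z. z \<in> ball 0 e \<Longrightarrow> norm (X z - vcons (\<gamma> j) (matrix_inv Ac *v stack 0 (s j))) \<le> C * norm z"
proof -
  define V0 where "V0 = matrix_inv Ac *v stack 0 (s j)"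
  have AV0: "Ac *v V0 = stack 0 (s j)"
    by (simp add: V0_def matrix_inv_cancel(1)[OF Ac_invertible])
  have QV0: "Qc *v V0 = \<gamma> j *s stack 0 (s j)"
    using s_eigen[of j] by (simp add: Qc_mult fast_matrix_mult V0_def[symmetric])
  have "V0 \<noteq> 0"
    using AV0 s_nonzero[of j] by auto
  then obtain i0 where "V0 $ i0 \<noteq> 0"
    by (auto simp: vec_eq_iff)
  define w where "w = inverse (V0 $ i0)"
  txt \<open>The unknown is \<open>vcons \<mu> V\<close>; its first equation normalises \<open>V $ i0 = V0 $ i0\<close>.\<close>
  define B0 :: "complex^(unit + ('n + 'r)) \<Rightarrow> complex^(unit + ('n + 'r)) \<Rightarrow> complex^(unit + ('n + 'r))"
    where "B0 x x' = vcons 0 (- (vhd x *s (Ac *v vtl x')))" for x x'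
  define L0 :: "complex^(unit + ('n + 'r)) \<Rightarrow> complex^(unit + ('n + 'r))"
    where "L0 x = vcons (vtl x $ i0 * w) (Qc *v vtl x)" for x
  define L1 :: "complex^(unit + ('n + 'r)) \<Rightarrow> complex^(unit + ('n + 'r))"
    where "L1 x = vcons 0 (- vtl x)" for x
  have linear: "vec_bilinear B0" "vec_bilinear (\<lambda>_ _. 0)" "vec_linear L0" "vec_linear L1"
    by (intro vec_bilinearI vec_linearI; simp add: B0_def L0_def L1_def vec.add vec.scale algebra_simps)+
  have root: "B0 (vcons (\<gamma> j) V0) (vcons (\<gamma> j) V0) + L0 (vcons (\<gamma> j) V0) + vcons (-1) 0 = 0"
    using \<open>V0 $ i0 \<noteq> 0\<close> by (simp add: B0_def L0_def w_def AV0 QV0)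
  have nondegenerate: "y = 0" if "B0 (vcons (\<gamma> j) V0) y + B0 y (vcons (\<gamma> j) V0) + L0 y = 0" for y
  proof -
    have "vtl y $ i0 = 0" and "Qc *v vtl y - \<gamma> j *s (Ac *v vtl y) - vhd y *s (Ac *v V0) = 0"
      using arg_cong[OF that, of vhd] arg_cong[OF that, of vtl] \<open>V0 $ i0 \<noteq> 0\<close>
      by (simp_all add: B0_def L0_def w_def algebra_simps)
    then show "y = 0"
      using fast_linearization_injective[OF V0_def \<open>V0 $ i0 \<noteq> 0\<close>] vcons_vhd_vtl[of y]
      by (metis vcons_zero)
  qed
  obtain e X c C where "e > 0" and X_holomorphic: "\<And>i. (\<lambda>z. X z $ i) holomorphic_on ball 0 e"
    and X_solves: "\<And>z. z \<in> ball 0 e \<Longrightarrow>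
      B0 (X z) (X z) + L0 (X z) + vcons (-1) 0 + z *s (0 + L1 (X z)) = 0"
    and "B0 (vcons (\<gamma> j) V0) c + B0 c (vcons (\<gamma> j) V0) + L0 c + (0 + L1 (vcons (\<gamma> j) V0)) = 0"
    and X_quadratic: "\<And>z. z \<in> ball 0 e \<Longrightarrow>
      norm (X z - vcons (\<gamma> j) V0 - z *s c) \<le> C * (norm z)^2"
    using quadratic_system_holomorphic_solution[OF linear root nondegenerate] by blast
  show ?thesis
  proof (rule that[OF \<open>e > 0\<close> X_holomorphic])
    fix z :: complex
    assume z: "z \<in> ball 0 e"
    show "Qc *v vtl (X z) - z *s vtl (X z) - vhd (X z) *s (Ac *v vtl (X z)) = 0"
      using arg_cong[OF X_solves[OF z], of vtl] by (simp add: B0_def L0_def L1_def algebra_simps)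
    show "norm (X z - vcons (\<gamma> j) (matrix_inv Ac *v stack 0 (s j))) \<le> (max C 0 * e + norm c) * norm z"
      using quadratic_bound_imp_linear_bound[OF X_quadratic[OF z]] z by (simp add: V0_def)
  qed
qed

lemma eigenmode_branches:
  defines "\<nu>0 j \<equiv> - 1 / complex_of_real (a j)"
    and "\<nu>1 j \<equiv> complex_of_real (ls j \<bullet> (Bstar fu fv gu gv qu qv *v rs j)) / complex_of_real (a j) ^ 3"
  obtains e X where "0 < e" and "\<And>k i. (\<lambda>z. X k z $ i) holomorphic_on ball 0 e"
    and "\<And>j z. z \<in> ball 0 e \<Longrightarrow> Qc *v vtl (X (Inl j) z) - z *s vtl (X (Inl j) z)
        - vhd (X (Inl j) z) *s (Ac *v vtl (X (Inl j) z)) = 0"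
    and "\<And>j z. z \<in> ball 0 e \<Longrightarrow> Qc *v vtl (X (Inr j) z) - z *s vtl (X (Inr j) z)
        - (z * vhd (X (Inr j) z)) *s (Ac *v vtl (X (Inr j) z)) = 0"
    and "\<And>j. \<exists>C. \<forall>z\<in>ball 0 e.
        norm (X (Inl j) z - vcons (\<gamma> j) (matrix_inv Ac *v stack 0 (s j))) \<le> C * norm z"
    and "\<And>j. \<exists>C. \<forall>z\<in>ball 0 e. norm (X (Inr j) z - vcons (\<nu>0 j) (Rstar j)) \<le> C * norm z \<and>
        norm (vhd (X (Inr j) z) - \<nu>0 j - z * \<nu>1 j) \<le> C * (norm z)^2"
proof -
  define R where "R k e X \<longleftrightarrow> (\<forall>i. (\<lambda>z. X z $ i) holomorphic_on ball 0 e) \<and>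
    (\<forall>z\<in>ball 0 e. Qc *v vtl (X z) - z *s vtl (X z)
       - (case k of Inl j \<Rightarrow> vhd (X z) | Inr j \<Rightarrow> z * vhd (X z)) *s (Ac *v vtl (X z)) = 0) \<and>
    (\<exists>C. \<forall>z\<in>ball 0 e. case k of
       Inl j \<Rightarrow> norm (X z - vcons (\<gamma> j) (matrix_inv Ac *v stack 0 (s j))) \<le> C * norm z
     | Inr j \<Rightarrow> norm (X z - vcons (\<nu>0 j) (Rstar j)) \<le> C * norm z \<and>
         norm (vhd (X z) - \<nu>0 j - z * \<nu>1 j) \<le> C * (norm z)^2)"
    for k :: "'r + 'n" and e and X :: "complex \<Rightarrow> complex^(unit + ('n + 'r))"
  have branch: "\<exists>e X. 0 < e \<and> R k e X" for k
  proof (cases k)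
    case (Inl j)
    obtain e X C where "0 < e" "\<And>i. (\<lambda>z. X z $ i) holomorphic_on ball 0 e"
      "\<And>z. z \<in> ball 0 e \<Longrightarrow> Qc *v vtl (X z) - z *s vtl (X z) - vhd (X z) *s (Ac *v vtl (X z)) = 0"
      "\<And>z. z \<in> ball 0 e \<Longrightarrow> norm (X z - vcons (\<gamma> j) (matrix_inv Ac *v stack 0 (s j))) \<le> C * norm z"
      using fast_mode[where j=j] by blast
    then have "0 < e \<and> R k e X"
      using Inl unfolding R_def by (auto intro!: exI[of _ C])
    then show ?thesis
      by blast
  next
    case (Inr j)
    obtain e X C where "0 < e" "\<And>i. (\<lambda>z. X z $ i) holomorphic_on ball 0 e"
      "\<And>z. z \<in> ball 0 e \<Longrightarrow> Qc *v vtl (X z) - z *s vtl (X z) - (z * vhd (X z)) *s (Ac *v vtl (X z)) = 0"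
      "\<And>z. z \<in> ball 0 e \<Longrightarrow> norm (X z - vcons (\<nu>0 j) (Rstar j)) \<le> C * norm z"
      "\<And>z. z \<in> ball 0 e \<Longrightarrow> norm (vhd (X z) - \<nu>0 j - z * \<nu>1 j) \<le> C * (norm z)^2"
      using slow_mode[of j] unfolding \<nu>0_def \<nu>1_def by blast
    then have "0 < e \<and> R k e X"
      using Inr unfolding R_def by (auto intro!: exI[of _ C])
    then show ?thesis
      by blast
  qed
  have shrink: "R k e' X" if "R k e X" "e' \<le> e" for k e e' X
  proof -
    have "ball 0 e' \<subseteq> ball 0 e"
      using \<open>e' \<le> e\<close> by auto
    with \<open>R k e X\<close> show ?thesis
      unfolding R_def by (meson holomorphic_on_subset subsetD)
  qed
  obtain e X where "0 < e" and R: "\<And>k. R k e (X k)"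
  proof (rule finite_uniform_radius[of R])
    show "\<exists>e X. 0 < e \<and> R k e X" for k
      by (rule branch)
    show "R k e' X" if "R k e X" "e' \<le> e" for k e e' X
      using that by (rule shrink)
  qed (rule that)
  show ?thesis
  proof (rule that[OF \<open>0 < e\<close>])
    show "(\<lambda>z. X k z $ i) holomorphic_on ball 0 e" for k i
      using R[of k] unfolding R_def by blast
    show "Qc *v vtl (X (Inl j) z) - z *s vtl (X (Inl j) z) - vhd (X (Inl j) z) *s (Ac *v vtl (X (Inl j) z)) = 0"
      if "z \<in> ball 0 e" for j z
      using R[of "Inl j"] that unfolding R_def by auto
    show "\<exists>C. \<forall>z\<in>ball 0 e.
        norm (X (Inl j) z - vcons (\<gamma> j) (matrix_inv Ac *v stack 0 (s j))) \<le> C * norm z" for j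
      using R[of "Inl j"] unfolding R_def by auto
    show "Qc *v vtl (X (Inr j) z) - z *s vtl (X (Inr j) z) - (z * vhd (X (Inr j) z)) *s (Ac *v vtl (X (Inr j) z)) = 0"
      if "z \<in> ball 0 e" for j z
      using R[of "Inr j"] that unfolding R_def by auto
    show "\<exists>C. \<forall>z\<in>ball 0 e. norm (X (Inr j) z - vcons (\<nu>0 j) (Rstar j)) \<le> C * norm z \<and>
        norm (vhd (X (Inr j) z) - \<nu>0 j - z * \<nu>1 j) \<le> C * (norm z)^2" for j
      using R[of "Inr j"] unfolding R_def by auto
  qed
qed

lemma initial_modes_invertible:
  assumes W_fast: "\<And>j. W (Inl j) = matrix_inv Ac *v stack 0 (s j)" and W_slow: "\<And>j. W (Inr j) = Rstar j"
  shows "invertible (\<chi> i k. W (sum_swap k) $ i)"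
proof (rule invertible_if_kernel_trivial)
  fix y
  assume "(\<chi> i k. W (sum_swap k) $ i) *v y = 0"
  then have combination: "(\<Sum>a\<in>UNIV. y $ Inl a *s Rstar a) + (\<Sum>b\<in>UNIV. y $ Inr b *s W (Inl b)) = 0"
    by (simp add: matrix_mult_sum column_def sum_UNIV_Plus W_slow)
  have QW: "Qc *v W (Inl b) = \<gamma> b *s stack 0 (s b)" for b
    using s_eigen[of b] by (simp add: W_fast Qc_mult fast_matrix_mult)
  have "(\<Sum>b\<in>UNIV. (y $ Inr b * \<gamma> b) *s stack (0::complex^'n) (s b)) = 0"
    using arg_cong[OF combination, of "(*v) Qc"]
    by (simp only: vec.add vec.sum vec.scale Qc_Rstar QW vector_smult_rzero sum.neutral_const add_0
        vector_smult_assoc vec.zero)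
  from arg_cong[OF this, of vpart] have "(\<Sum>b\<in>UNIV. (y $ Inr b * \<gamma> b) *s s b) = 0"
    by (simp add: vpart_sum)
  then have "\<forall>b\<in>UNIV. y $ Inr b * \<gamma> b = 0"
    by (rule eigenvectors_independent[OF s_eigen s_nonzero \<gamma>_inj finite])
  then have y_fast: "y $ Inr b = 0" for b
    using \<gamma>_nonzero by simp
  then have slow_0: "(\<Sum>a\<in>UNIV. y $ Inl a *s cvec (rs a)) = 0"
    using arg_cong[OF combination, of upart] by (simp add: upart_sum upart_Rstar)
  have "(cmat Lmat *v (\<Sum>a\<in>UNIV. y $ Inl a *s cvec (rs a))) $ k = y $ Inl k" for k
    by (simp add: vec.sum vec.scale Lmat_rs if_distrib[of "(*) _"] cong: if_cong)
  then have "y $ Inl k = 0" for k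
    by (simp add: slow_0)
  with y_fast show "y = 0"
    by (metis vec_eq_iff zero_index sum.exhaust)
qed

lemma eigenmodes:
  obtains e \<mu> V where "0 < e"
    and "\<And>k. \<mu> k holomorphic_on ball 0 e" and "\<And>k i. (\<lambda>z. V k z $ i) holomorphic_on ball 0 e"
    and "\<And>k z. z \<in> ball 0 e \<Longrightarrow> Qc *v V k z - z *s V k z - \<mu> k z *s (Ac *v V k z) = 0"
    and "\<And>j. V (Inl j) 0 = matrix_inv Ac *v stack 0 (s j)" and "\<And>j. V (Inr j) 0 = Rstar j"
    and "\<And>j. (\<lambda>z. \<mu> (Inl j) z - \<gamma> j) \<in> O[at 0](\<lambda>z. z)"
    and "\<And>j. (\<lambda>z. norm (V (Inl j) z - matrix_inv Ac *v stack 0 (s j))) \<in> O[at 0](\<lambda>z. norm z)"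
    and "\<And>j. (\<lambda>z. \<mu> (Inr j) z - (- z / complex_of_real (a j)
        + z\<^sup>2 * complex_of_real (ls j \<bullet> (Bstar fu fv gu gv qu qv *v rs j)) / complex_of_real (a j) ^ 3))
        \<in> O[at 0](\<lambda>z. z ^ 3)"
    and "\<And>j. (\<lambda>z. norm (V (Inr j) z - Rstar j)) \<in> O[at 0](\<lambda>z. norm z)"
proof -
  define \<nu>0 where "\<nu>0 j = - 1 / complex_of_real (a j)" for j
  define \<nu>1 where "\<nu>1 j = complex_of_real (ls j \<bullet> (Bstar fu fv gu gv qu qv *v rs j)) / complex_of_real (a j) ^ 3"
    for j
  obtain e X where "0 < e" and X_holomorphic: "\<And>k i. (\<lambda>z. X k z $ i) holomorphic_on ball 0 e"
    and fast_pencil: "\<And>j z. z \<in> ball 0 e \<Longrightarrow> Qc *v vtl (X (Inl j) z) - z *s vtl (X (Inl j) z)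
        - vhd (X (Inl j) z) *s (Ac *v vtl (X (Inl j) z)) = 0"
    and slow_pencil: "\<And>j z. z \<in> ball 0 e \<Longrightarrow> Qc *v vtl (X (Inr j) z) - z *s vtl (X (Inr j) z)
        - (z * vhd (X (Inr j) z)) *s (Ac *v vtl (X (Inr j) z)) = 0"
    and fast_bound: "\<And>j. \<exists>C. \<forall>z\<in>ball 0 e.
        norm (X (Inl j) z - vcons (\<gamma> j) (matrix_inv Ac *v stack 0 (s j))) \<le> C * norm z"
    and slow_bound: "\<And>j. \<exists>C. \<forall>z\<in>ball 0 e. norm (X (Inr j) z - vcons (\<nu>0 j) (Rstar j)) \<le> C * norm z \<and>
        norm (vhd (X (Inr j) z) - \<nu>0 j - z * \<nu>1 j) \<le> C * (norm z)^2"
    using eigenmode_branches unfolding \<nu>0_def \<nu>1_def by blast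
  define \<mu> where "\<mu> k z = (case k of Inl j \<Rightarrow> vhd (X k z) | Inr j \<Rightarrow> z * vhd (X k z))" for k z
  define V where "V k z = vtl (X k z)" for k z
  show ?thesis
  proof (rule that[OF \<open>0 < e\<close>])
    show "\<mu> k holomorphic_on ball 0 e" for k
      using vhd_vtl_holomorphic(1)[OF X_holomorphic] unfolding \<mu>_def
      by (cases k) (simp_all add: holomorphic_on_mult)
    show "(\<lambda>z. V k z $ i) holomorphic_on ball 0 e" for k i
      unfolding V_def by (rule vhd_vtl_holomorphic(2)[OF X_holomorphic])
    show "Qc *v V k z - z *s V k z - \<mu> k z *s (Ac *v V k z) = 0" if "z \<in> ball 0 e" for k z
      using fast_pencil[OF that] slow_pencil[OF that] by (cases k) (simp_all add: \<mu>_def V_def)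
    show "V (Inl j) 0 = matrix_inv Ac *v stack 0 (s j)"
      and "(\<lambda>z. \<mu> (Inl j) z - \<gamma> j) \<in> O[at 0](\<lambda>z. z)"
      and "(\<lambda>z. norm (V (Inl j) z - matrix_inv Ac *v stack 0 (s j))) \<in> O[at 0](\<lambda>z. norm z)" for j
    proof -
      obtain C where "\<forall>z\<in>ball 0 e.
          norm (X (Inl j) z - vcons (\<gamma> j) (matrix_inv Ac *v stack 0 (s j))) \<le> C * norm z"
        using fast_bound by blast
      from vcons_branch_expansion[OF \<open>0 < e\<close> this] show
        "V (Inl j) 0 = matrix_inv Ac *v stack 0 (s j)"
        "(\<lambda>z. \<mu> (Inl j) z - \<gamma> j) \<in> O[at 0](\<lambda>z. z)"
        "(\<lambda>z. norm (V (Inl j) z - matrix_inv Ac *v stack 0 (s j))) \<in> O[at 0](\<lambda>z. norm z)"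
        by (simp_all add: \<mu>_def V_def)
    qed
    show "V (Inr j) 0 = Rstar j" and "(\<lambda>z. norm (V (Inr j) z - Rstar j)) \<in> O[at 0](\<lambda>z. norm z)" for j
    proof -
      obtain C where "\<forall>z\<in>ball 0 e. norm (X (Inr j) z - vcons (\<nu>0 j) (Rstar j)) \<le> C * norm z"
        using slow_bound[of j] by blast
      from vcons_branch_expansion[OF \<open>0 < e\<close> this]
      show "V (Inr j) 0 = Rstar j" "(\<lambda>z. norm (V (Inr j) z - Rstar j)) \<in> O[at 0](\<lambda>z. norm z)"
        by (simp_all add: V_def)
    qed
    show "(\<lambda>z. \<mu> (Inr j) z - (- z / complex_of_real (a j)
        + z\<^sup>2 * complex_of_real (ls j \<bullet> (Bstar fu fv gu gv qu qv *v rs j)) / complex_of_real (a j) ^ 3))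
        \<in> O[at 0](\<lambda>z. z ^ 3)" for j
    proof -
      obtain C where C: "\<forall>z\<in>ball 0 e. norm (vhd (X (Inr j) z) - \<nu>0 j - z * \<nu>1 j) \<le> C * (norm z)^2"
        using slow_bound[of j] by blast
      have "\<mu> (Inr j) z - (- z / complex_of_real (a j)
          + z\<^sup>2 * complex_of_real (ls j \<bullet> (Bstar fu fv gu gv qu qv *v rs j)) / complex_of_real (a j) ^ 3)
          = z * (vhd (X (Inr j) z) - \<nu>0 j - z * \<nu>1 j)" for z
        by (simp add: \<mu>_def \<nu>0_def \<nu>1_def field_simps power2_eq_square)
      moreover have "norm (z * (vhd (X (Inr j) z) - \<nu>0 j - z * \<nu>1 j)) \<le> C * norm (z ^ 3)"
        if "z \<in> ball 0 e" for z
      proof -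
        have "norm z * norm (vhd (X (Inr j) z) - \<nu>0 j - z * \<nu>1 j) \<le> norm z * (C * (norm z)^2)"
          using C that by (intro mult_left_mono) auto
        then show ?thesis
          by (simp add: norm_mult norm_power power3_eq_cube power2_eq_square mult_ac)
      qed
      ultimately show ?thesis
        by (intro bigo_at_0_if_ball_bound[OF \<open>0 < e\<close>, where C=C]) simp
    qed
  qed
qed

lemma eigenmode_fundamental_system:
  shows "\<exists>\<epsilon>>0. \<exists>(\<mu> :: 'r + 'n \<Rightarrow> complex \<Rightarrow> complex) (V :: 'r + 'n \<Rightarrow> complex \<Rightarrow> complex^('n+'r))
            (\<gamma> :: 'r \<Rightarrow> complex) (s :: 'r \<Rightarrow> complex^'r).
     (\<forall>k. \<mu> k analytic_on ball 0 \<epsilon>) \<and>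
     (\<forall>k i. (\<lambda>z. V k z $ i) analytic_on ball 0 \<epsilon>) \<and>
     (\<forall>lam\<in>ball 0 \<epsilon>.
        (\<forall>k. (\<lambda>x. exp (\<mu> k lam * complex_of_real x) *s V k lam)
               \<in> odesols (cmat (blk fu fv gu gv)) (cmat (blk 0 0 qu qv)) lam) \<and>
        (\<forall>c. (\<forall>x. (\<Sum>k\<in>UNIV. c k *s (exp (\<mu> k lam * complex_of_real x) *s V k lam)) = 0)
              \<longrightarrow> (\<forall>k. c k = 0)) \<and>
        (\<forall>W\<in>odesols (cmat (blk fu fv gu gv)) (cmat (blk 0 0 qu qv)) lam.
           \<exists>c. \<forall>x. W x = (\<Sum>k\<in>UNIV. c k *s (exp (\<mu> k lam * complex_of_real x) *s V k lam)))) \<and>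
     inj \<gamma> \<and>
     (\<forall>j. \<gamma> j \<noteq> 0 \<and> s j \<noteq> 0 \<and>
          (rowblk (cmat qu) (cmat qv) ** matrix_inv (cmat (blk fu fv gu gv)) ** embI) *v s j
            = \<gamma> j *s s j) \<and>
     (\<forall>j. (\<lambda>z. \<mu> (Inl j) z - \<gamma> j) \<in> O[at 0](\<lambda>z. z)) \<and>
     (\<forall>j. (\<lambda>z. norm (V (Inl j) z - matrix_inv (cmat (blk fu fv gu gv)) *v stack 0 (s j)))
            \<in> O[at 0](\<lambda>z. norm z)) \<and>
     (\<forall>j. (\<lambda>z. \<mu> (Inr j) z - (- z / complex_of_real (a j)
               + z\<^sup>2 * complex_of_real (ls j \<bullet> (Bstar fu fv gu gv qu qv *v rs j))
                 / complex_of_real (a j) ^ 3))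
            \<in> O[at 0](\<lambda>z. z ^ 3)) \<and>
     (\<forall>j. (\<lambda>z. norm (V (Inr j) z - cvec (stack (rs j) (- (matrix_inv qv ** qu) *v rs j))))
            \<in> O[at 0](\<lambda>z. norm z))"
proof -
  obtain e \<mu> V where "0 < e" and \<mu>_holomorphic: "\<And>k. \<mu> k holomorphic_on ball 0 e"
    and V_holomorphic: "\<And>k i. (\<lambda>z. V k z $ i) holomorphic_on ball 0 e"
    and pencil: "\<And>k z. z \<in> ball 0 e \<Longrightarrow> Qc *v V k z - z *s V k z - \<mu> k z *s (Ac *v V k z) = 0"
    and V_0: "\<And>j. V (Inl j) 0 = matrix_inv Ac *v stack 0 (s j)" "\<And>j. V (Inr j) 0 = Rstar j"
    and expansions: "\<And>j. (\<lambda>z. \<mu> (Inl j) z - \<gamma> j) \<in> O[at 0](\<lambda>z. z)"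
      "\<And>j. (\<lambda>z. norm (V (Inl j) z - matrix_inv Ac *v stack 0 (s j))) \<in> O[at 0](\<lambda>z. norm z)"
      "\<And>j. (\<lambda>z. \<mu> (Inr j) z - (- z / complex_of_real (a j)
        + z\<^sup>2 * complex_of_real (ls j \<bullet> (Bstar fu fv gu gv qu qv *v rs j)) / complex_of_real (a j) ^ 3))
        \<in> O[at 0](\<lambda>z. z ^ 3)"
      "\<And>j. (\<lambda>z. norm (V (Inr j) z - Rstar j)) \<in> O[at 0](\<lambda>z. norm z)"
    using eigenmodes by blast
  have "isCont (\<lambda>z. V k z $ i) 0" for k i
    using holomorphic_on_imp_continuous_on[OF V_holomorphic] \<open>0 < e\<close>
    by (simp add: continuous_on_eq_continuous_at)
  moreover have "invertible (\<chi> i k. V (sum_swap k) 0 $ i)"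
    by (rule initial_modes_invertible[OF V_0])
  ultimately obtain \<epsilon> where "0 < \<epsilon>" and invertible: "\<And>z. z \<in> ball 0 \<epsilon> \<Longrightarrow> invertible (\<chi> i k. V (sum_swap k) z $ i)"
    using invertible_near[where P="\<lambda>z. \<chi> i k. V (sum_swap k) z $ i" and w=0] by auto
  define r where "r = min e \<epsilon>"
  have "0 < r" and r: "ball 0 r \<subseteq> ball 0 e" "ball 0 r \<subseteq> ball 0 \<epsilon>"
    using \<open>0 < e\<close> \<open>0 < \<epsilon>\<close> by (auto simp: r_def)
  have fundamental: "(\<forall>k. (\<lambda>x. exp (\<mu> k lam * complex_of_real x) *s V k lam) \<in> odesols Ac Qc lam) \<and>
      (\<forall>c. (\<forall>x. (\<Sum>k\<in>UNIV. c k *s (exp (\<mu> k lam * complex_of_real x) *s V k lam)) = 0)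
        \<longrightarrow> (\<forall>k. c k = 0)) \<and>
      (\<forall>W\<in>odesols Ac Qc lam.
        \<exists>c. \<forall>x. W x = (\<Sum>k\<in>UNIV. c k *s (exp (\<mu> k lam * complex_of_real x) *s V k lam)))"
    if "lam \<in> ball 0 r" for lam
  proof -
    have "lam \<in> ball 0 e" and "lam \<in> ball 0 \<epsilon>"
      using r that by blast+
    then show ?thesis
      by (intro exp_modes_fundamental_system[where V="\<lambda>k. V k lam" and \<mu>="\<lambda>k. \<mu> k lam" and h=sum_swap]
          Ac_invertible pencil bij_sum_swap invertible)
  qed
  show ?thesis
  proof (intro exI[of _ r] exI[of _ \<mu>] exI[of _ V] exI[of _ \<gamma>] exI[of _ s] conjI \<open>0 < r\<close>)
    show "\<forall>k. \<mu> k analytic_on ball 0 r" "\<forall>k i. (\<lambda>z. V k z $ i) analytic_on ball 0 r"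
      using holomorphic_on_subset[OF \<mu>_holomorphic r(1)] holomorphic_on_subset[OF V_holomorphic r(1)]
      by (simp_all add: analytic_on_open)
  qed (use fundamental \<gamma>_inj \<gamma>_nonzero s_nonzero s_eigen expansions in \<open>simp_all add: Rstar_def\<close>)
qed

end

theorem lemma5p1:
  fixes fu :: "real^'n::finite^'n" and fv :: "real^'r::finite^'n"
    and gu :: "real^'n^'r" and gv :: "real^'r^'r"
    and qu :: "real^'n^'r" and qv :: "real^'r^'r"
    and a :: "'n \<Rightarrow> real" and rs :: "'n \<Rightarrow> real^'n" and ls :: "'n \<Rightarrow> real^'n"
  assumes H1_real: "\<forall>\<sigma>\<in>eigvals (cmat (blk fu fv gu gv)). \<sigma> \<in> \<real>"
    and H1_semisimple: "semisimple (cmat (blk fu fv gu gv))"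
    and H1_nonzero: "0 \<notin> eigvals (cmat (blk fu fv gu gv))"
    and qv_stable: "\<forall>\<sigma>\<in>eigvals (cmat qv). Re \<sigma> < 0"
    and H2_distinct: "inj a"
    and H2_nonzero: "\<forall>j. a j \<noteq> 0"
    and H2_right: "\<forall>j. dfstar fu fv qu qv *v rs j = a j *s rs j"
    and H2_left: "\<forall>j. ls j v* dfstar fu fv qu qv = a j *s ls j"
    and H2_norm: "\<forall>j k. ls j \<bullet> rs k = (if j = k then 1 else 0)"
    and H3: "\<exists>\<theta>>0. \<forall>\<xi>::real. \<forall>\<sigma>\<in>eigvals (\<chi> i j. \<i> * complex_of_real \<xi> * cmat (blk fu fv gu gv) $ i $ j
                                              + cmat (blk 0 0 qu qv) $ i $ j).
               Re \<sigma> \<le> - \<theta> * \<xi>\<^sup>2 / (1 + \<xi>\<^sup>2)"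
    and A1: "card (eigvals (rowblk (cmat qu) (cmat qv) ** matrix_inv (cmat (blk fu fv gu gv)) ** embI))
             = CARD('r)"
  shows "\<exists>\<epsilon>>0. \<exists>(\<mu> :: 'r + 'n \<Rightarrow> complex \<Rightarrow> complex) (V :: 'r + 'n \<Rightarrow> complex \<Rightarrow> complex^('n+'r))
            (\<gamma> :: 'r \<Rightarrow> complex) (s :: 'r \<Rightarrow> complex^'r).
     (\<forall>k. \<mu> k analytic_on ball 0 \<epsilon>) \<and>
     (\<forall>k i. (\<lambda>z. V k z $ i) analytic_on ball 0 \<epsilon>) \<and>
     (\<forall>lam\<in>ball 0 \<epsilon>.
        (\<forall>k. (\<lambda>x. exp (\<mu> k lam * complex_of_real x) *s V k lam)
               \<in> odesols (cmat (blk fu fv gu gv)) (cmat (blk 0 0 qu qv)) lam) \<and>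
        (\<forall>c. (\<forall>x. (\<Sum>k\<in>UNIV. c k *s (exp (\<mu> k lam * complex_of_real x) *s V k lam)) = 0)
              \<longrightarrow> (\<forall>k. c k = 0)) \<and>
        (\<forall>W\<in>odesols (cmat (blk fu fv gu gv)) (cmat (blk 0 0 qu qv)) lam.
           \<exists>c. \<forall>x. W x = (\<Sum>k\<in>UNIV. c k *s (exp (\<mu> k lam * complex_of_real x) *s V k lam)))) \<and>
     inj \<gamma> \<and>
     (\<forall>j. \<gamma> j \<noteq> 0 \<and> s j \<noteq> 0 \<and>
          (rowblk (cmat qu) (cmat qv) ** matrix_inv (cmat (blk fu fv gu gv)) ** embI) *v s j
            = \<gamma> j *s s j) \<and>
     (\<forall>j. (\<lambda>z. \<mu> (Inl j) z - \<gamma> j) \<in> O[at 0](\<lambda>z. z)) \<and>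
     (\<forall>j. (\<lambda>z. norm (V (Inl j) z - matrix_inv (cmat (blk fu fv gu gv)) *v stack 0 (s j)))
            \<in> O[at 0](\<lambda>z. norm z)) \<and>
     (\<forall>j. (\<lambda>z. \<mu> (Inr j) z - (- z / complex_of_real (a j)
               + z\<^sup>2 * complex_of_real (ls j \<bullet> (Bstar fu fv gu gv qu qv *v rs j))
                 / complex_of_real (a j) ^ 3))
            \<in> O[at 0](\<lambda>z. z ^ 3)) \<and>
     (\<forall>j. (\<lambda>z. norm (V (Inr j) z - cvec (stack (rs j) (- (matrix_inv qv ** qu) *v rs j))))
            \<in> O[at 0](\<lambda>z. norm z))"
proof -
  interpret relaxation_system fu fv gu gv qu qv a rs ls
    using H1_nonzero qv_stable H2_distinct H2_nonzero H2_right H2_left H2_norm A1 by unfold_locales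
  obtain \<gamma> :: "'r \<Rightarrow> complex" and s :: "'r \<Rightarrow> complex^'r" where "inj \<gamma>" "\<And>j. \<gamma> j \<noteq> 0"
    "\<And>j. s j \<noteq> 0" "\<And>j. fast_matrix *v s j = \<gamma> j *s s j"
    using fast_eigendata by blast
  then interpret fast_eigenbasis fu fv gu gv qu qv a rs ls \<gamma> s
    by unfold_locales
  show ?thesis
    by (rule eigenmode_fundamental_system)
qed

end
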